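(* Let $g \geq 3$ be an odd integer. If $G$ is a graph on $n$ vertices whose girth is $g$ or $g+1$, then $$P(G,m) - P_{DP}(G,m) = O(m^{n-g}) \quad \text{as } m \to \infty.$$ Consequently, for every graph $M$, $$P(M,m) - P_{DP}(M,m) = O(m^{|V(M)|-3}) \quad \text{as } m \to \infty.$$
   Context: All graphs are finite and simple. The girth of a graph is the length of a shortest cycle (infinite if the graph is acyclic). For $m \in \mathbb{N}$, $[m]=\{1,\dots,m\}$, and $P(G,m)$ (the chromatic polynomial) is the number of proper colorings $V(G) \to [m]$. For $S,U \subseteq V(H)$, $E_H(S,U)$ is the set of edges of $H$ with one endpoint in $S$ and the other in $U$. A cover of a graph $G$ is a pair $\mathcal{H}=(L,H)$ where $H$ is a graph and $L: V(G)\to \mathcal{P}(V(H))$ satisfies: (1) $\{L(u): u\in V(G)\}$ is a partition of $V(H)$; (2) for each $u \in V(G)$, $H[L(u)]$ is complete; (3) if $E_H(L(u),L(v))\neq\emptyset$ then $u=v$ or $uv\in E(G)$; (4) if $uv \in E(G)$ then $E_H(L(u),L(v))$ is a matching (possibly empty). The cover is $m$-fold if $|L(u)|=m$ for all $u\in V(G)$. An $\mathcal{H}$-coloring of $G$ is an independent set $I$ of $H$ with $|I|=|V(G)|$ (equivalently, an independent set with $|I\cap L(u)|=1$ for every $u$). $P_{DP}(G,\mathcal{H})$ is the number of $\mathcal{H}$-colorings of $G$, and the DP color function is $P_{DP}(G,m)=\min P_{DP}(G,\mathcal{H})$, the minimum over all $m$-fold covers $\mathcal{H}$ of $G$, for $m\in\mathbb{N}$.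 *)

theory Defs
  imports Complex_Main "HOL-Library.Extended_Nat" "HOL-Library.FuncSet" "HOL-Library.Landau_Symbols"
begin

type_synonym 'a graph = "'a set \<times> 'a set set"

definition verts :: "'a graph \<Rightarrow> 'a set" where "verts G = fst G"
definition edges :: "'a graph \<Rightarrow> 'a set set" where "edges G = snd G"

definition wf_graph :: "'a graph \<Rightarrow> bool" where
  "wf_graph G \<longleftrightarrow> finite (verts G) \<and>
     (\<forall>e\<in>edges G. \<exists>x y. x \<noteq> y \<and> e = {x, y} \<and> x \<in> verts G \<and> y \<in> verts G)"

definition has_cycle :: "'a graph \<Rightarrow> nat \<Rightarrow> bool" where
  "has_cycle G k \<longleftrightarrow> k \<ge> 3 \<and> (\<exists>vs. length vs = k \<and> distinct vs \<and> set vs \<subseteq> verts G \<and>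
      (\<forall>i<k. {vs ! i, vs ! ((i + 1) mod k)} \<in> edges G))"

text \<open>Girth: length of a shortest cycle, infinity if acyclic.\<close>
definition girth :: "'a graph \<Rightarrow> enat" where
  "girth G = Inf {enat k | k. has_cycle G k}"

definition chrom_poly :: "'a graph \<Rightarrow> nat \<Rightarrow> nat" where
  "chrom_poly G m = card {f \<in> verts G \<rightarrow>\<^sub>E {1..m}. \<forall>u v. {u, v} \<in> edges G \<longrightarrow> u \<noteq> v \<longrightarrow> f u \<noteq> f v}"

definition cross_edges :: "'b graph \<Rightarrow> 'b set \<Rightarrow> 'b set \<Rightarrow> 'b set set" where
  "cross_edges H S U = {e \<in> edges H. \<exists>x\<in>S. \<exists>y\<in>U. e = {x, y}}"

definition is_matching :: "'b set set \<Rightarrow> bool" where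
  "is_matching M \<longleftrightarrow> (\<forall>e1\<in>M. \<forall>e2\<in>M. e1 \<noteq> e2 \<longrightarrow> e1 \<inter> e2 = {})"

text \<open>A cover (L,H) of G; the vertices of H are taken to be natural numbers
  (every finite cover is isomorphic to one of this form).\<close>
definition is_cover :: "'a graph \<Rightarrow> ('a \<Rightarrow> nat set) \<Rightarrow> nat graph \<Rightarrow> bool" where
  "is_cover G L H \<longleftrightarrow> wf_graph H \<and>
     (\<Union>u\<in>verts G. L u) = verts H \<and>
     (\<forall>u\<in>verts G. \<forall>v\<in>verts G. u \<noteq> v \<longrightarrow> L u \<inter> L v = {}) \<and>
     (\<forall>u\<in>verts G. \<forall>x\<in>L u. \<forall>y\<in>L u. x \<noteq> y \<longrightarrow> {x, y} \<in> edges H) \<and>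
     (\<forall>u\<in>verts G. \<forall>v\<in>verts G. cross_edges H (L u) (L v) \<noteq> {} \<longrightarrow> u = v \<or> {u, v} \<in> edges G) \<and>
     (\<forall>u\<in>verts G. \<forall>v\<in>verts G. {u, v} \<in> edges G \<longrightarrow> u \<noteq> v \<longrightarrow> is_matching (cross_edges H (L u) (L v)))"

definition is_mfold_cover :: "'a graph \<Rightarrow> nat \<Rightarrow> ('a \<Rightarrow> nat set) \<Rightarrow> nat graph \<Rightarrow> bool" where
  "is_mfold_cover G m L H \<longleftrightarrow> is_cover G L H \<and> (\<forall>u\<in>verts G. finite (L u) \<and> card (L u) = m)"

definition independent :: "'b graph \<Rightarrow> 'b set \<Rightarrow> bool" where
  "independent H I \<longleftrightarrow> I \<subseteq> verts H \<and> (\<forall>x\<in>I. \<forall>y\<in>I. {x, y} \<notin> edges H)"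

text \<open>Number of H-colorings of G: independent sets of H of size |V(G)|.\<close>
definition P_DP_cover :: "'a graph \<Rightarrow> nat graph \<Rightarrow> nat" where
  "P_DP_cover G H = card {I. independent H I \<and> card I = card (verts G)}"

definition P_DP :: "'a graph \<Rightarrow> nat \<Rightarrow> nat" where
  "P_DP G m = Inf {P_DP_cover G H | L H. is_mfold_cover G m L H}"

end

theory Submission
  imports Defs "HOL-Library.Nat_Bijection"
begin

text \<open>
  An \<open>m\<close>-fold cover of \<open>G\<close> is read as colour lists \<open>X u\<close> with a conflict relation that is a
  partial matching along every edge; ordinary colouring is the case where colour \<open>a\<close> conflicts
  with colour \<open>a\<close>.  Inclusion-exclusion over the edge sets \<open>F \<subseteq> E(G)\<close> writes the number of
  colourings as \<open>\<Sum>F (-1)^|F| N(F)\<close>, where \<open>N(F)\<close> counts assignments in which every edge of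
  \<open>F\<close> is in conflict.  Peeling leaves off \<open>F\<close> shows that \<open>N(F) = m^(n-|F|)\<close> for a forest and a
  perfect matching cover, that \<open>N(F) \<le> m^(n-g)\<close> unless \<open>F\<close> is a single \<open>g\<close>-cycle, and that for
  a \<open>g\<close>-cycle \<open>N(F) \<le> m^(n-g+1)\<close> with equality for ordinary colouring.  As \<open>g\<close> is odd the
  cycle terms carry the sign \<open>-1\<close>, so ordinary colouring exceeds every perfect cover by at most
  \<open>2^|E| m^(n-g)\<close>.  Completing a cover to a perfect one only loses colourings, and ordinary
  colouring is itself a cover, which gives \<open>0 \<le> P(G,m) - P_DP(G,m) = O(m^(n-g))\<close>.
\<close>

section \<open>Colour systems and conflicting assignments\<close>

definition conflicts :: "('a \<Rightarrow> nat \<Rightarrow> 'a \<Rightarrow> nat \<Rightarrow> bool) \<Rightarrow> ('a \<Rightarrow> nat) \<Rightarrow> 'a set \<Rightarrow> bool" where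
  "conflicts R c e \<longleftrightarrow> (\<exists>u v. e = {u, v} \<and> u \<noteq> v \<and> R u (c u) v (c v))"

definition conflicting_assignments ::
    "'a set \<Rightarrow> ('a \<Rightarrow> nat set) \<Rightarrow> ('a \<Rightarrow> nat \<Rightarrow> 'a \<Rightarrow> nat \<Rightarrow> bool) \<Rightarrow> 'a set set \<Rightarrow> ('a \<Rightarrow> nat) set" where
  "conflicting_assignments V X R F = {c \<in> Pi\<^sub>E V X. \<forall>e\<in>F. conflicts R c e}"

definition conflict_free_assignments ::
    "'a set \<Rightarrow> ('a \<Rightarrow> nat set) \<Rightarrow> ('a \<Rightarrow> nat \<Rightarrow> 'a \<Rightarrow> nat \<Rightarrow> bool) \<Rightarrow> 'a set set \<Rightarrow> ('a \<Rightarrow> nat) set" where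
  "conflict_free_assignments V X R E = {c \<in> Pi\<^sub>E V X. \<forall>e\<in>E. \<not> conflicts R c e}"

text \<open>A cover of \<open>G\<close> seen from \<open>G\<close>: the list \<open>X u\<close> of each vertex, and the relation
  \<open>R u a v b\<close> saying that colour \<open>a\<close> at \<open>u\<close> and colour \<open>b\<close> at \<open>v\<close> are joined in the cover.\<close>

definition matching_system :: "'a graph \<Rightarrow> nat \<Rightarrow> ('a \<Rightarrow> nat set) \<Rightarrow> ('a \<Rightarrow> nat \<Rightarrow> 'a \<Rightarrow> nat \<Rightarrow> bool) \<Rightarrow> bool" where
  "matching_system G m X R \<longleftrightarrow>
     (\<forall>u\<in>verts G. finite (X u) \<and> card (X u) = m) \<and> (\<forall>u a v b. R u a v b \<longrightarrow> R v b u a) \<and>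
     (\<forall>u\<in>verts G. \<forall>v\<in>verts G. u \<noteq> v \<longrightarrow> {u, v} \<in> edges G \<longrightarrow>
        (\<forall>a\<in>X u. \<forall>b\<in>X v. \<forall>b'\<in>X v. R u a v b \<longrightarrow> R u a v b' \<longrightarrow> b = b'))"

definition perfect_matching_system ::
    "'a graph \<Rightarrow> nat \<Rightarrow> ('a \<Rightarrow> nat set) \<Rightarrow> ('a \<Rightarrow> nat \<Rightarrow> 'a \<Rightarrow> nat \<Rightarrow> bool) \<Rightarrow> bool" where
  "perfect_matching_system G m X R \<longleftrightarrow> matching_system G m X R \<and>
     (\<forall>u\<in>verts G. \<forall>v\<in>verts G. u \<noteq> v \<longrightarrow> {u, v} \<in> edges G \<longrightarrow> (\<forall>a\<in>X u. \<exists>b\<in>X v. R u a v b))"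

abbreviation equal_colours :: "'a \<Rightarrow> nat \<Rightarrow> 'a \<Rightarrow> nat \<Rightarrow> bool" where
  "equal_colours \<equiv> \<lambda>u a v b. a = b"

lemma perfect_matching_system_equal_colours:
  "perfect_matching_system G m (\<lambda>_. {1..m}) equal_colours"
  unfolding perfect_matching_system_def matching_system_def by auto

lemma wf_graph_finite_verts: "wf_graph G \<Longrightarrow> finite (verts G)"
  unfolding wf_graph_def by simp

lemma wf_graph_edge_subset: "wf_graph G \<Longrightarrow> e \<in> edges G \<Longrightarrow> e \<subseteq> verts G"
  unfolding wf_graph_def by (metis insert_subset empty_subsetI)

lemma wf_graph_edgeE:
  assumes "wf_graph G" "e \<in> edges G"
  obtains x y where "x \<noteq> y" "e = {x, y}" "x \<in> verts G" "y \<in> verts G"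
  using assms unfolding wf_graph_def by meson

lemma wf_graph_edge_other_end:
  assumes "wf_graph G" "e \<in> edges G" "v \<in> e"
  obtains w where "e = {v, w}" "w \<noteq> v"
  using assms by (elim wf_graph_edgeE) (auto simp: insert_commute)

lemma wf_graph_finite_edges: "wf_graph G \<Longrightarrow> finite (edges G)"
  by (rule finite_subset[of _ "Pow (verts G)"]) (auto dest: wf_graph_edge_subset simp: wf_graph_finite_verts)

lemma matching_system_finite: "matching_system G m X R \<Longrightarrow> u \<in> verts G \<Longrightarrow> finite (X u)"
  unfolding matching_system_def by blast

lemma conflicts_doubleton:
  assumes "\<forall>u a v b. R u a v b \<longrightarrow> R v b u a" "u \<noteq> v"
  shows "conflicts R c {u, v} \<longleftrightarrow> R u (c u) v (c v)"
  using assms unfolding conflicts_def by (auto simp: doubleton_eq_iff)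

lemma conflicts_fun_upd: "v \<notin> e \<Longrightarrow> conflicts R (c(v := a)) e \<longleftrightarrow> conflicts R c e"
  unfolding conflicts_def by (intro ex_cong1 conj_cong refl) auto

lemma finite_conflicting_assignments:
  assumes "wf_graph G" "matching_system G m X R"
  shows "finite (conflicting_assignments (verts G) X R F)"
proof (rule finite_subset)
  show "conflicting_assignments (verts G) X R F \<subseteq> Pi\<^sub>E (verts G) X"
    unfolding conflicting_assignments_def by blast
  show "finite (Pi\<^sub>E (verts G) X)"
    using assms by (intro finite_PiE wf_graph_finite_verts matching_system_finite)
qed

lemma finite_conflict_free_assignments:
  assumes "wf_graph G" "matching_system G m X R"
  shows "finite (conflict_free_assignments (verts G) X R E)"
proof (rule finite_subset)
  show "conflict_free_assignments (verts G) X R E \<subseteq> Pi\<^sub>E (verts G) X"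
    unfolding conflict_free_assignments_def by blast
  show "finite (Pi\<^sub>E (verts G) X)"
    using assms by (intro finite_PiE wf_graph_finite_verts matching_system_finite)
qed

lemma card_conflicting_assignments_empty:
  assumes "wf_graph G" "matching_system G m X R"
  shows "card (conflicting_assignments (verts G) X R {}) = m ^ card (verts G)"
proof -
  have "card (conflicting_assignments (verts G) X R {}) = (\<Prod>u\<in>verts G. card (X u))"
    unfolding conflicting_assignments_def using wf_graph_finite_verts[OF assms(1)] by (simp add: card_PiE)
  also have "\<dots> = m ^ card (verts G)"
    using assms(2) unfolding matching_system_def by simp
  finally show ?thesis .
qed

lemma card_conflicting_assignments_antimono:
  assumes "wf_graph G" "matching_system G m X R" "F' \<subseteq> F"
  shows "card (conflicting_assignments (verts G) X R F) \<le> card (conflicting_assignments (verts G) X R F')"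
  using assms(3) by (intro card_mono finite_conflicting_assignments[OF assms(1,2)])
    (auto simp: conflicting_assignments_def)

lemma recolour_leaf_into:
  assumes "v \<in> V" "\<forall>e\<in>F. v \<notin> e"
  shows "(\<lambda>(c, a). c(v := a)) ` (conflicting_assignments V X R (insert {u, v} F) \<times> X v)
           \<subseteq> conflicting_assignments V X R F"
proof clarify
  fix c a assume c: "c \<in> conflicting_assignments V X R (insert {u, v} F)" and a: "a \<in> X v"
  have "conflicts R (c(v := a)) e" if e: "e \<in> F" for e
  proof -
    have "conflicts R c e" using c e unfolding conflicting_assignments_def by blast
    then show ?thesis using assms(2) e by (simp add: conflicts_fun_upd)
  qed
  moreover have "c(v := a) \<in> Pi\<^sub>E V X"
    using c a assms(1) unfolding conflicting_assignments_def by (auto simp: PiE_def extensional_def)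
  ultimately show "c(v := a) \<in> conflicting_assignments V X R F" unfolding conflicting_assignments_def by blast
qed

text \<open>The matching condition recovers the colour of the leaf \<open>v\<close> from that of \<open>u\<close>.\<close>

lemma recolour_leaf_inj_on:
  assumes sys: "matching_system G m X R" and uv: "{u, v} \<in> edges G" "u \<noteq> v" "u \<in> verts G" "v \<in> verts G"
  shows "inj_on (\<lambda>(c, a). c(v := a)) (conflicting_assignments (verts G) X R (insert {u, v} F) \<times> X v)"
proof (rule inj_onI, clarify)
  fix c a c' a'
  assume c: "c \<in> conflicting_assignments (verts G) X R (insert {u, v} F)"
    and c': "c' \<in> conflicting_assignments (verts G) X R (insert {u, v} F)"
    and eq: "c(v := a) = c'(v := a')"
  have sym: "\<forall>u a v b. R u a v b \<longrightarrow> R v b u a" using sys unfolding matching_system_def by blast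
  have off: "\<And>w. w \<noteq> v \<Longrightarrow> c w = c' w" using eq by (metis fun_upd_other)
  have "R u (c u) v (c v)" "R u (c' u) v (c' v)"
    using c c' conflicts_doubleton[OF sym uv(2)] unfolding conflicting_assignments_def by auto
  moreover have "c u \<in> X u" "c v \<in> X v" "c' v \<in> X v"
    using c c' uv(3,4) unfolding conflicting_assignments_def by auto
  ultimately have "c v = c' v"
    using sys uv off[OF uv(2)] unfolding matching_system_def by metis
  then show "c = c' \<and> a = a'" using off eq by (metis ext fun_upd_same)
qed

lemma recolour_leaf_onto:
  assumes sys: "perfect_matching_system G m X R"
    and uv: "{u, v} \<in> edges G" "u \<noteq> v" "u \<in> verts G" "v \<in> verts G" and leaf: "\<forall>e\<in>F. v \<notin> e"
  shows "conflicting_assignments (verts G) X R F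
           \<subseteq> (\<lambda>(c, a). c(v := a)) ` (conflicting_assignments (verts G) X R (insert {u, v} F) \<times> X v)"
proof
  fix d assume d: "d \<in> conflicting_assignments (verts G) X R F"
  have sym: "\<forall>u a v b. R u a v b \<longrightarrow> R v b u a"
    using sys unfolding perfect_matching_system_def matching_system_def by blast
  obtain b where b: "b \<in> X v" "R u (d u) v b"
    using sys uv d unfolding perfect_matching_system_def conflicting_assignments_def by blast
  have "conflicts R (d(v := b)) e" if e: "e \<in> F" for e
  proof -
    have "conflicts R d e" using d e unfolding conflicting_assignments_def by blast
    then show ?thesis using leaf e by (simp add: conflicts_fun_upd)
  qed
  moreover have "conflicts R (d(v := b)) {u, v}" using b(2) uv(2) conflicts_doubleton[OF sym uv(2)] by simp
  moreover have "d(v := b) \<in> Pi\<^sub>E (verts G) X"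
    using d b(1) uv(4) unfolding conflicting_assignments_def by (auto simp: PiE_def extensional_def)
  ultimately have "(d(v := b), d v) \<in> conflicting_assignments (verts G) X R (insert {u, v} F) \<times> X v"
    using d uv(4) unfolding conflicting_assignments_def by auto
  then show "d \<in> (\<lambda>(c, a). c(v := a)) ` (conflicting_assignments (verts G) X R (insert {u, v} F) \<times> X v)"
    by (rule rev_image_eqI) simp
qed

text \<open>Recolouring the leaf \<open>v\<close> of \<open>{u, v}\<close> freely turns an assignment in which \<open>{u, v}\<close> is in
  conflict into one constrained by \<open>F\<close> alone.\<close>

lemma card_conflicting_assignments_add_leaf:
  assumes G: "wf_graph G" and sys: "matching_system G m X R"
    and uv: "{u, v} \<in> edges G" "u \<noteq> v" and leaf: "\<forall>e\<in>F. v \<notin> e"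
  shows "card (conflicting_assignments (verts G) X R (insert {u, v} F)) * m
           \<le> card (conflicting_assignments (verts G) X R F)"
    and "perfect_matching_system G m X R \<Longrightarrow>
         card (conflicting_assignments (verts G) X R (insert {u, v} F)) * m
           = card (conflicting_assignments (verts G) X R F)"
proof -
  let ?B = "conflicting_assignments (verts G) X R (insert {u, v} F)"
    and ?B' = "conflicting_assignments (verts G) X R F"
  have uvV: "u \<in> verts G" "v \<in> verts G" using wf_graph_edge_subset[OF G uv(1)] by auto
  note into = recolour_leaf_into[OF uvV(2) leaf] and inj = recolour_leaf_inj_on[OF sys uv uvV]
  have card_dom: "card (?B \<times> X v) = card ?B * m"
    using sys uvV(2) unfolding matching_system_def by (simp add: card_cartesian_product)
  show "card ?B * m \<le> card ?B'"
    using card_inj_on_le[OF inj into finite_conflicting_assignments[OF G sys]] card_dom by simp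
  assume "perfect_matching_system G m X R"
  then have "?B' = (\<lambda>(c, a). c(v := a)) ` (?B \<times> X v)"
    using into recolour_leaf_onto[OF _ uv uvV leaf] by blast
  then show "card ?B * m = card ?B'" using card_image[OF inj] card_dom by simp
qed

section \<open>Paths and cycles as vertex lists\<close>

definition path_edges :: "'a list \<Rightarrow> 'a set set" where
  "path_edges vs = {{vs ! i, vs ! Suc i} | i. Suc i < length vs}"

definition cycle_edges :: "'a list \<Rightarrow> 'a set set" where
  "cycle_edges vs = {{vs ! i, vs ! (Suc i mod length vs)} | i. i < length vs}"

lemma path_edgesI: "Suc i < length vs \<Longrightarrow> {vs ! i, vs ! Suc i} \<in> path_edges vs"
  unfolding path_edges_def by blast

lemma path_edges_short: "length vs \<le> 1 \<Longrightarrow> path_edges vs = {}"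
  unfolding path_edges_def by auto

lemma path_edges_vertex: "e \<in> path_edges vs \<Longrightarrow> x \<in> e \<Longrightarrow> x \<in> set vs"
  unfolding path_edges_def by auto

lemma path_edges_snoc:
  assumes "vs \<noteq> []"
  shows "path_edges (vs @ [x]) = insert {last vs, x} (path_edges vs)"
proof (intro equalityI subsetI)
  fix e assume "e \<in> path_edges (vs @ [x])"
  then obtain i where i: "Suc i < Suc (length vs)" "e = {(vs @ [x]) ! i, (vs @ [x]) ! Suc i}"
    unfolding path_edges_def by auto
  show "e \<in> insert {last vs, x} (path_edges vs)"
  proof (cases "Suc i < length vs")
    case True
    then show ?thesis using i path_edgesI[of i vs] by (simp add: nth_append)
  next
    case False
    then have "i = length vs - 1" using i by simp
    then show ?thesis using i assms by (simp add: nth_append last_conv_nth)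
  qed
next
  fix e assume "e \<in> insert {last vs, x} (path_edges vs)"
  then show "e \<in> path_edges (vs @ [x])"
  proof
    assume "e = {last vs, x}"
    then show ?thesis
      using assms path_edgesI[of "length vs - 1" "vs @ [x]"] by (simp add: nth_append last_conv_nth)
  next
    assume "e \<in> path_edges vs"
    then obtain i where "Suc i < length vs" "e = {vs ! i, vs ! Suc i}" unfolding path_edges_def by auto
    then show ?thesis using path_edgesI[of i "vs @ [x]"] by (simp add: nth_append)
  qed
qed

lemma path_edges_drop_subset: "path_edges (drop i vs) \<subseteq> path_edges vs"
proof
  fix e assume "e \<in> path_edges (drop i vs)"
  then obtain j where "Suc j < length vs - i" "e = {vs ! (i + j), vs ! Suc (i + j)}"
    unfolding path_edges_def by auto
  then show "e \<in> path_edges vs" using path_edgesI[of "i + j" vs] by simp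
qed

lemma path_edges_take_subset: "path_edges (take k vs) \<subseteq> path_edges vs"
  unfolding path_edges_def by auto

lemma cycle_edges_eq_insert_path_edges:
  assumes "2 \<le> length vs"
  shows "cycle_edges vs = insert {last vs, hd vs} (path_edges vs)"
proof (intro equalityI subsetI)
  have ne: "vs \<noteq> []" using assms by auto
  fix e assume "e \<in> cycle_edges vs"
  then obtain i where i: "i < length vs" "e = {vs ! i, vs ! (Suc i mod length vs)}"
    unfolding cycle_edges_def by auto
  show "e \<in> insert {last vs, hd vs} (path_edges vs)"
  proof (cases "Suc i < length vs")
    case True
    then show ?thesis using i path_edgesI[of i vs] by simp
  next
    case False
    then have "i = length vs - 1" using i by simp
    then show ?thesis using i ne by (simp add: last_conv_nth hd_conv_nth)
  qed
next
  fix e assume "e \<in> insert {last vs, hd vs} (path_edges vs)"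
  then show "e \<in> cycle_edges vs"
  proof
    assume "e = {last vs, hd vs}"
    moreover have "Suc (length vs - 1) = length vs" using assms by simp
    moreover have "vs \<noteq> []" using assms by auto
    ultimately have "e = {vs ! (length vs - 1), vs ! (Suc (length vs - 1) mod length vs)}"
      by (simp add: last_conv_nth hd_conv_nth)
    moreover have "length vs - 1 < length vs" using assms by simp
    ultimately show ?thesis unfolding cycle_edges_def by blast
  next
    assume "e \<in> path_edges vs"
    then obtain i where "Suc i < length vs" "e = {vs ! i, vs ! Suc i}" unfolding path_edges_def by auto
    then show ?thesis unfolding cycle_edges_def by (intro CollectI exI[of _ i]) simp
  qed
qed

lemma path_edges_subset_cycle_edges: "path_edges vs \<subseteq> cycle_edges vs"
  using cycle_edges_eq_insert_path_edges[of vs] path_edges_short[of vs] by fastforce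

lemma card_cycle_edges:
  assumes "distinct vs" "3 \<le> length vs"
  shows "card (cycle_edges vs) = length vs"
proof -
  let ?k = "length vs"
  let ?edge = "\<lambda>i. {vs ! i, vs ! (Suc i mod ?k)}"
  have "inj_on ?edge {..<?k}"
  proof (rule inj_onI)
    fix i j assume ij: "i \<in> {..<?k}" "j \<in> {..<?k}" and eq: "?edge i = ?edge j"
    show "i = j"
    proof (rule ccontr)
      assume "i \<noteq> j"
      then have "vs ! i = vs ! (Suc j mod ?k)" "vs ! (Suc i mod ?k) = vs ! j"
        using eq ij assms(1) by (auto simp: doubleton_eq_iff nth_eq_iff_index_eq)
      moreover have "0 < ?k" using assms(2) by linarith
      then have "Suc i mod ?k < ?k" "Suc j mod ?k < ?k" by simp_all
      ultimately have "i = Suc j mod ?k" "j = Suc i mod ?k"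
        using ij assms(1) by (simp_all add: nth_eq_iff_index_eq)
      moreover have "Suc x mod ?k = (if Suc x = ?k then 0 else Suc x)" if "x < ?k" for x
        using that by auto
      ultimately show False using ij assms(2) by (simp split: if_splits)
    qed
  qed
  moreover have "cycle_edges vs = ?edge ` {..<?k}" unfolding cycle_edges_def by auto
  ultimately show ?thesis by (simp add: card_image)
qed

lemma has_cycleI:
  assumes "distinct vs" "set vs \<subseteq> verts G" "3 \<le> length vs" "cycle_edges vs \<subseteq> edges G"
  shows "has_cycle G (length vs)"
  using assms unfolding has_cycle_def cycle_edges_def by auto

lemma card_conflicting_assignments_path:
  assumes G: "wf_graph G" and sys: "matching_system G m X R"
    and vs: "distinct vs" "vs \<noteq> []" "path_edges vs \<subseteq> edges G"
  shows "card (conflicting_assignments (verts G) X R (path_edges vs)) * m ^ (length vs - 1) \<le> m ^ card (verts G) \<and>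
         (perfect_matching_system G m X R \<longrightarrow>
          card (conflicting_assignments (verts G) X R (path_edges vs)) * m ^ (length vs - 1) = m ^ card (verts G))"
  using vs
proof (induction vs rule: rev_induct)
  case Nil
  then show ?case by simp
next
  case (snoc x vs)
  let ?B = "\<lambda>F. card (conflicting_assignments (verts G) X R F)"
  show ?case
  proof (cases "vs = []")
    case True
    then show ?thesis using card_conflicting_assignments_empty[OF G sys] by (simp add: path_edges_short)
  next
    case False
    have pe: "path_edges (vs @ [x]) = insert {last vs, x} (path_edges vs)" using path_edges_snoc[OF False] .
    have x_new: "\<forall>e\<in>path_edges vs. x \<notin> e" using snoc.prems(1) path_edges_vertex by fastforce
    have edge: "{last vs, x} \<in> edges G" "last vs \<noteq> x" using snoc.prems pe False by auto
    note leaf = card_conflicting_assignments_add_leaf[OF G sys edge x_new]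
    have IH: "?B (path_edges vs) * m ^ (length vs - 1) \<le> m ^ card (verts G) \<and>
         (perfect_matching_system G m X R \<longrightarrow> ?B (path_edges vs) * m ^ (length vs - 1) = m ^ card (verts G))"
      using snoc.IH snoc.prems pe False by auto
    have "m ^ (length (vs @ [x]) - 1) = m * m ^ (length vs - 1)"
      using False by (cases vs) auto
    then have split: "?B (path_edges (vs @ [x])) * m ^ (length (vs @ [x]) - 1)
                 = ?B (insert {last vs, x} (path_edges vs)) * m * m ^ (length vs - 1)"
      using pe by simp
    have "?B (path_edges (vs @ [x])) * m ^ (length (vs @ [x]) - 1) \<le> ?B (path_edges vs) * m ^ (length vs - 1)"
      unfolding split using leaf(1) by (rule mult_right_mono) simp
    moreover have "?B (path_edges (vs @ [x])) * m ^ (length (vs @ [x]) - 1) = ?B (path_edges vs) * m ^ (length vs - 1)"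
      if "perfect_matching_system G m X R"
      unfolding split leaf(2)[OF that] ..
    ultimately show ?thesis using IH by auto
  qed
qed

lemma conflicting_assignments_equal_colours_cycle_edges:
  assumes "distinct vs" "2 \<le> length vs"
  shows "conflicting_assignments V X equal_colours (cycle_edges vs)
           = conflicting_assignments V X equal_colours (path_edges vs)"
proof (intro equalityI subsetI)
  fix c assume c: "c \<in> conflicting_assignments V X equal_colours (path_edges vs)"
  have distinct_nth: "vs ! i \<noteq> vs ! j" if "i < length vs" "j < length vs" "i \<noteq> j" for i j
    using that assms(1) by (simp add: nth_eq_iff_index_eq)
  have step: "c (vs ! Suc i) = c (vs ! i)" if "Suc i < length vs" for i
    using c path_edgesI[OF that] distinct_nth[of i "Suc i"] that
    unfolding conflicting_assignments_def by (auto simp: conflicts_doubleton)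
  have all_equal: "c (vs ! i) = c (vs ! 0)" if "i < length vs" for i
    using that by (induction i) (auto simp: step)
  have "vs \<noteq> []" using assms(2) by auto
  then have "c (last vs) = c (hd vs)" "last vs \<noteq> hd vs"
    using assms all_equal[of "length vs - 1"] distinct_nth[of "length vs - 1" 0]
    by (auto simp: last_conv_nth hd_conv_nth)
  then have "conflicts equal_colours c {last vs, hd vs}" by (simp add: conflicts_doubleton)
  then show "c \<in> conflicting_assignments V X equal_colours (cycle_edges vs)"
    using c cycle_edges_eq_insert_path_edges[OF assms(2)] unfolding conflicting_assignments_def by auto
qed (use path_edges_subset_cycle_edges in \<open>auto simp: conflicting_assignments_def\<close>)

text \<open>The chord from \<open>vs ! i\<close> to \<open>vs ! j\<close> closes the cycle \<open>vs ! i, \<dots>, vs ! j\<close>.\<close>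

lemma chord_shortens_cycle:
  assumes vs: "distinct vs" "set vs \<subseteq> verts G" "cycle_edges vs \<subseteq> edges G"
    and ij: "i < j" "j < length vs"
    and chord: "{vs ! i, vs ! j} \<in> edges G" "{vs ! i, vs ! j} \<notin> cycle_edges vs"
  shows "\<exists>k<length vs. has_cycle G k"
proof -
  let ?ws = "drop i (take (Suc j) vs)"
  have len: "length ?ws = Suc j - i" using ij by simp
  have ends: "hd ?ws = vs ! i" "last ?ws = vs ! j" using ij by (simp_all add: hd_drop_conv_nth last_conv_nth)
  have "j \<noteq> Suc i"
    using chord path_edgesI[of i vs] path_edges_subset_cycle_edges ij by auto
  moreover have "\<not> (i = 0 \<and> Suc j = length vs)"
  proof
    assume "i = 0 \<and> Suc j = length vs"
    moreover have "vs \<noteq> []" using ij by auto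
    moreover have "j = length vs - 1" using calculation(1) by linarith
    ultimately have "{vs ! i, vs ! j} = {last vs, hd vs}"
      by (simp add: last_conv_nth hd_conv_nth insert_commute)
    then show False using chord cycle_edges_eq_insert_path_edges[of vs] ij by auto
  qed
  moreover have "cycle_edges ?ws \<subseteq> edges G"
  proof -
    have "path_edges ?ws \<subseteq> cycle_edges vs"
      using path_edges_drop_subset path_edges_take_subset path_edges_subset_cycle_edges by blast
    moreover have "2 \<le> length ?ws" using len ij by simp
    ultimately show ?thesis
      using cycle_edges_eq_insert_path_edges[of ?ws] ends chord(1) vs(3) by (auto simp: insert_commute)
  qed
  moreover have "set ?ws \<subseteq> verts G"
    using vs(2) by (meson order_trans set_drop_subset set_take_subset)
  ultimately have "has_cycle G (Suc j - i)" "Suc j - i < length vs"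
    using has_cycleI[of ?ws G] vs(1) len ij by auto
  then show ?thesis by blast
qed

lemma shortest_cycle_chordless:
  assumes vs: "distinct vs" "set vs \<subseteq> verts G" "cycle_edges vs \<subseteq> edges G"
    and shortest: "\<forall>k<length vs. \<not> has_cycle G k"
    and xy: "x \<in> set vs" "y \<in> set vs" "x \<noteq> y" "{x, y} \<in> edges G"
  shows "{x, y} \<in> cycle_edges vs"
proof (rule ccontr)
  assume chord: "{x, y} \<notin> cycle_edges vs"
  obtain i j where "i < length vs" "j < length vs" "x = vs ! i" "y = vs ! j" "i \<noteq> j"
    using xy by (metis in_set_conv_nth)
  then show False
    using chord_shortens_cycle[OF vs, of i j] chord_shortens_cycle[OF vs, of j i] shortest chord xy(4)
    by (cases "i < j") (auto simp: insert_commute)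
qed

lemma maximal_path_exists:
  assumes G: "wf_graph G" and F: "F \<subseteq> edges G" "F \<noteq> {}"
  shows "\<exists>vs. distinct vs \<and> set vs \<subseteq> verts G \<and> 2 \<le> length vs \<and> path_edges vs \<subseteq> F \<and>
             (\<forall>w. {last vs, w} \<in> F \<longrightarrow> w \<in> set vs)"
proof -
  define is_path_length where "is_path_length = (\<lambda>k. \<exists>vs. distinct vs \<and> set vs \<subseteq> verts G \<and>
     2 \<le> length vs \<and> path_edges vs \<subseteq> F \<and> length vs = k)"
  obtain e where "e \<in> F" using F(2) by blast
  then obtain u v where uv: "u \<noteq> v" "{u, v} \<in> F" "u \<in> verts G" "v \<in> verts G"
    using F(1) G by (metis subsetD wf_graph_edgeE)
  have "path_edges [u, v] = {{u, v}}" unfolding path_edges_def by auto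
  then have "is_path_length 2" unfolding is_path_length_def using uv by (intro exI[of _ "[u, v]"]) auto
  moreover have "k \<le> card (verts G)" if k: "is_path_length k" for k
  proof -
    obtain vs where "distinct vs" "set vs \<subseteq> verts G" "length vs = k"
      using k unfolding is_path_length_def by blast
    then show ?thesis using card_mono[OF wf_graph_finite_verts[OF G], of "set vs"] by (simp add: distinct_card)
  qed
  ultimately obtain k where "is_path_length k" and longest: "\<forall>k'. is_path_length k' \<longrightarrow> k' \<le> k"
    using Nat.ex_has_greatest_nat[of is_path_length 2 "card (verts G)"] by blast
  then obtain vs where vs: "distinct vs" "set vs \<subseteq> verts G" "2 \<le> length vs" "path_edges vs \<subseteq> F"
    "length vs = k" unfolding is_path_length_def by blast
  have "w \<in> set vs" if w: "{last vs, w} \<in> F" for w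
  proof (rule ccontr)
    assume new: "w \<notin> set vs"
    have "vs \<noteq> []" using vs(3) by auto
    then have "path_edges (vs @ [w]) \<subseteq> F" using path_edges_snoc[of vs w] vs(4) w by simp
    moreover have "w \<in> verts G" using wf_graph_edge_subset[OF G] w F(1) by blast
    ultimately have "is_path_length (length (vs @ [w]))"
      unfolding is_path_length_def using vs new by (intro exI[of _ "vs @ [w]"]) simp
    then show False using longest vs(5) by fastforce
  qed
  then show ?thesis using vs by blast
qed

text \<open>Follow a maximal path in \<open>F\<close>; the last vertex has a second \<open>F\<close>-edge, which must lead back
  into the path and closes a cycle.\<close>

lemma cycle_in_edge_set_without_leaves:
  assumes G: "wf_graph G" and F: "F \<subseteq> edges G" "F \<noteq> {}"
    and no_leaf: "\<forall>e\<in>F. \<forall>v\<in>e. \<exists>e'\<in>F. v \<in> e' \<and> e' \<noteq> e"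
  shows "\<exists>vs. distinct vs \<and> set vs \<subseteq> verts G \<and> 3 \<le> length vs \<and> cycle_edges vs \<subseteq> F"
proof -
  obtain vs where vs: "distinct vs" "set vs \<subseteq> verts G" "2 \<le> length vs" "path_edges vs \<subseteq> F"
    and maximal: "\<forall>w. {last vs, w} \<in> F \<longrightarrow> w \<in> set vs"
    using maximal_path_exists[OF G F] by blast
  let ?k = "length vs"
  define p where "p = vs ! (?k - 2)"
  have "vs \<noteq> []" using vs(3) by auto
  then have last: "last vs = vs ! (?k - 1)" by (simp add: last_conv_nth)
  have "{p, last vs} \<in> path_edges vs"
    using path_edgesI[of "?k - 2" vs] vs(3) unfolding p_def last by (simp add: Suc_diff_Suc numeral_2_eq_2)
  then have pF: "{p, last vs} \<in> F" using vs(4) by blast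
  then obtain e' where e': "e' \<in> F" "last vs \<in> e'" "e' \<noteq> {p, last vs}" using no_leaf by blast
  have "e' \<in> edges G" using F(1) e'(1) by blast
  then obtain w where w: "e' = {last vs, w}" "w \<noteq> last vs"
    by (rule wf_graph_edge_other_end[OF G _ e'(2)])
  have "w \<in> set vs" using maximal e'(1) w(1) by blast
  then obtain i where i: "i < ?k" "w = vs ! i" by (auto simp: in_set_conv_nth)
  have "i \<noteq> ?k - 1" "i \<noteq> ?k - 2" using w e'(3) i(2) unfolding last p_def by auto
  then have i_small: "i + 2 < ?k" using i(1) by linarith
  let ?ws = "drop i vs"
  have "hd ?ws = w" "last ?ws = last vs" "2 \<le> length ?ws" using i i_small by (auto simp: hd_drop_conv_nth)
  then have "cycle_edges ?ws = insert {last vs, w} (path_edges ?ws)"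
    using cycle_edges_eq_insert_path_edges[of ?ws] by simp
  then have "cycle_edges ?ws \<subseteq> F" using path_edges_drop_subset[of i vs] vs(4) e'(1) w(1) by auto
  moreover have "set ?ws \<subseteq> verts G" using vs(2) set_drop_subset by fast
  ultimately show ?thesis using vs(1) i_small by (intro exI[of _ ?ws]) auto
qed

section \<open>Counting conflicts on an edge set\<close>

text \<open>A bound \<open>N \<le> m ^ (n - k)\<close> is stated as \<open>N * m ^ k \<le> m ^ n\<close>, which avoids truncated
  subtraction in the exponent.\<close>

definition conflict_bound :: "'a graph \<Rightarrow> nat \<Rightarrow> nat \<Rightarrow> 'a set set \<Rightarrow> bool" where
  "conflict_bound G m k F \<longleftrightarrow> (\<forall>X R. matching_system G m X R \<longrightarrow>
     card (conflicting_assignments (verts G) X R F) * m ^ k \<le> m ^ card (verts G))"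

definition exact_conflict_count :: "'a graph \<Rightarrow> nat \<Rightarrow> 'a set set \<Rightarrow> bool" where
  "exact_conflict_count G m F \<longleftrightarrow> (\<forall>X R. perfect_matching_system G m X R \<longrightarrow>
     card (conflicting_assignments (verts G) X R F) * m ^ card F = m ^ card (verts G))"

definition girth_cycle_count :: "'a graph \<Rightarrow> nat \<Rightarrow> nat \<Rightarrow> 'a set set \<Rightarrow> bool" where
  "girth_cycle_count G m g F \<longleftrightarrow> card F = g \<and> conflict_bound G m (g - 1) F \<and>
     card (conflicting_assignments (verts G) (\<lambda>_. {1..m}) equal_colours F) * m ^ (g - 1) = m ^ card (verts G)"

lemma conflict_bound_antimono:
  "wf_graph G \<Longrightarrow> F' \<subseteq> F \<Longrightarrow> conflict_bound G m k F' \<Longrightarrow> conflict_bound G m k F"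
  unfolding conflict_bound_def
  by (meson card_conflicting_assignments_antimono le_trans mult_le_mono1)

lemma conflict_bound_weaken:
  "1 \<le> m \<Longrightarrow> k' \<le> k \<Longrightarrow> conflict_bound G m k F \<Longrightarrow> conflict_bound G m k' F"
  unfolding conflict_bound_def by (meson le_trans mult_le_mono2 power_increasing)

lemma conflict_bound_add_leaf:
  assumes "wf_graph G" "{u, v} \<in> edges G" "u \<noteq> v" "\<forall>e\<in>F. v \<notin> e" "conflict_bound G m k F"
  shows "conflict_bound G m (Suc k) (insert {u, v} F)"
  unfolding conflict_bound_def
proof (intro allI impI)
  fix X R assume sys: "matching_system G m X R"
  let ?B = "\<lambda>F. card (conflicting_assignments (verts G) X R F)"
  have "?B (insert {u, v} F) * m ^ Suc k = ?B (insert {u, v} F) * m * m ^ k" by simp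
  also have "\<dots> \<le> ?B F * m ^ k"
    using card_conflicting_assignments_add_leaf(1)[OF assms(1) sys assms(2-4)] by (rule mult_right_mono) simp
  also have "\<dots> \<le> m ^ card (verts G)" using assms(5) sys unfolding conflict_bound_def by blast
  finally show "?B (insert {u, v} F) * m ^ Suc k \<le> m ^ card (verts G)" .
qed

lemma conflict_bound_path_edges:
  assumes "wf_graph G" "distinct vs" "vs \<noteq> []" "path_edges vs \<subseteq> edges G"
  shows "conflict_bound G m (length vs - 1) (path_edges vs)"
  using card_conflicting_assignments_path[OF assms(1) _ assms(2-4)] unfolding conflict_bound_def by blast

lemma exact_conflict_count_empty: "wf_graph G \<Longrightarrow> exact_conflict_count G m {}"
  unfolding exact_conflict_count_def perfect_matching_system_def
  using card_conflicting_assignments_empty by fastforce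

lemma exact_conflict_count_add_leaf:
  assumes "wf_graph G" "{u, v} \<in> edges G" "u \<noteq> v" "\<forall>e\<in>F. v \<notin> e" "finite F"
    and "exact_conflict_count G m F"
  shows "exact_conflict_count G m (insert {u, v} F)"
  unfolding exact_conflict_count_def
proof (intro allI impI)
  fix X R assume sys: "perfect_matching_system G m X R"
  let ?B = "\<lambda>F. card (conflicting_assignments (verts G) X R F)"
  have "{u, v} \<notin> F" using assms(4) by blast
  then have "?B (insert {u, v} F) * m ^ card (insert {u, v} F) = ?B (insert {u, v} F) * m * m ^ card F"
    using assms(5) by simp
  also have "\<dots> = ?B F * m ^ card F"
    using sys card_conflicting_assignments_add_leaf(2)[OF assms(1) _ assms(2-4)]
    unfolding perfect_matching_system_def by simp
  also have "\<dots> = m ^ card (verts G)" using assms(6) sys unfolding exact_conflict_count_def by blast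
  finally show "?B (insert {u, v} F) * m ^ card (insert {u, v} F) = m ^ card (verts G)" .
qed

lemma girth_cycle_count_cycle_edges:
  assumes G: "wf_graph G" and vs: "distinct vs" "3 \<le> length vs" "cycle_edges vs \<subseteq> edges G"
  shows "girth_cycle_count G m (length vs) (cycle_edges vs)"
proof -
  have path: "path_edges vs \<subseteq> edges G" "vs \<noteq> []"
    using path_edges_subset_cycle_edges vs(2,3) by auto
  have "conflict_bound G m (length vs - 1) (cycle_edges vs)"
    using conflict_bound_antimono[OF G path_edges_subset_cycle_edges] conflict_bound_path_edges[OF G vs(1) path(2,1)]
    by blast
  moreover have "card (conflicting_assignments (verts G) (\<lambda>_. {1..m}) equal_colours (cycle_edges vs))
                    * m ^ (length vs - 1) = m ^ card (verts G)"
  proof -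
    have pm: "perfect_matching_system G m (\<lambda>_. {1..m}) equal_colours"
      by (rule perfect_matching_system_equal_colours)
    then have "matching_system G m (\<lambda>_. {1..m}) equal_colours"
      unfolding perfect_matching_system_def by blast
    then show ?thesis
      using card_conflicting_assignments_path[OF G _ vs(1) path(2,1)] pm
        conflicting_assignments_equal_colours_cycle_edges[OF vs(1)] vs(2) by simp
  qed
  ultimately show ?thesis using card_cycle_edges[OF vs(1,2)] unfolding girth_cycle_count_def by simp
qed

text \<open>An extra edge cannot be a chord of a shortest cycle, so it hangs off the cycle as a leaf
  of the path obtained by dropping the closing edge.\<close>

lemma conflict_bound_shortest_cycle_with_extra_edge:
  assumes G: "wf_graph G" and vs: "distinct vs" "set vs \<subseteq> verts G" "3 \<le> length vs"
    and shortest: "\<forall>k<length vs. \<not> has_cycle G k"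
    and F: "F \<subseteq> edges G" "cycle_edges vs \<subseteq> F" "e \<in> F" "e \<notin> cycle_edges vs"
  shows "conflict_bound G m (length vs) F"
proof -
  have cycle: "cycle_edges vs \<subseteq> edges G" using F(1,2) by blast
  have path: "path_edges vs \<subseteq> F" "vs \<noteq> []" using path_edges_subset_cycle_edges vs(3) F(2) by auto
  obtain x y where xy: "x \<noteq> y" "e = {x, y}" using F(1,3) G by (meson subsetD wf_graph_edgeE)
  have "\<not> (x \<in> set vs \<and> y \<in> set vs)"
    using shortest_cycle_chordless[OF vs(1,2) cycle shortest _ _ xy(1)] F(1,3,4) xy(2) by blast
  then obtain z w where zw: "e = {z, w}" "z \<noteq> w" "w \<notin> set vs"
    using xy by (metis insert_commute)
  have "\<forall>e'\<in>path_edges vs. w \<notin> e'" using zw(3) path_edges_vertex by fast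
  then have "conflict_bound G m (Suc (length vs - 1)) (insert e (path_edges vs))"
    using conflict_bound_add_leaf[OF G _ zw(2) _ conflict_bound_path_edges[OF G vs(1) path(2)]]
      path(1) F(1,3) zw(1) by blast
  moreover have "Suc (length vs - 1) = length vs" using vs(3) by simp
  moreover have "insert e (path_edges vs) \<subseteq> F" using path(1) F(3) by blast
  ultimately show ?thesis using conflict_bound_antimono[OF G] by metis
qed

lemma conflict_class_without_leaves:
  assumes G: "wf_graph G" and m: "1 \<le> m" and girth: "\<forall>k. has_cycle G k \<longrightarrow> g \<le> k"
    and F: "F \<subseteq> edges G" "F \<noteq> {}" and no_leaf: "\<forall>e\<in>F. \<forall>v\<in>e. \<exists>e'\<in>F. v \<in> e' \<and> e' \<noteq> e"
  shows "girth_cycle_count G m g F \<or> conflict_bound G m g F"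
proof -
  obtain vs where vs: "distinct vs" "set vs \<subseteq> verts G" "3 \<le> length vs" "cycle_edges vs \<subseteq> F"
    using cycle_in_edge_set_without_leaves[OF G F no_leaf] by blast
  let ?k = "length vs"
  have cycle: "cycle_edges vs \<subseteq> edges G" using vs(4) F(1) by blast
  then have "g \<le> ?k" using girth has_cycleI[OF vs(1-3)] by blast
  consider (long) "g < ?k" | (whole) "?k = g" "F = cycle_edges vs" | (extra) "?k = g" "F \<noteq> cycle_edges vs"
    using \<open>g \<le> ?k\<close> by linarith
  then show ?thesis
  proof cases
    case long
    have path: "path_edges vs \<subseteq> F" "vs \<noteq> []" using path_edges_subset_cycle_edges vs(3,4) by auto
    then have "conflict_bound G m (?k - 1) (path_edges vs)"
      using conflict_bound_path_edges[OF G vs(1)] F(1) by blast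
    moreover have "g \<le> ?k - 1" using long by simp
    ultimately have "conflict_bound G m g (path_edges vs)"
      using conflict_bound_weaken[OF m] by blast
    then show ?thesis using conflict_bound_antimono[OF G path(1)] by blast
  next
    case whole
    then show ?thesis using girth_cycle_count_cycle_edges[OF G vs(1,3) cycle] by simp
  next
    case extra
    then obtain e where "e \<in> F" "e \<notin> cycle_edges vs" using vs(4) by blast
    moreover have "\<forall>k<?k. \<not> has_cycle G k" using girth extra(1) by fastforce
    ultimately show ?thesis
      using conflict_bound_shortest_cycle_with_extra_edge[OF G vs(1-3) _ F(1) vs(4)] extra(1) by blast
  qed
qed

text \<open>Peeling leaves off \<open>F\<close>: a forest has an exact count for every perfect cover; otherwise
  what remains has no leaves, hence contains a cycle, and only a lone \<open>g\<close>-cycle escapes the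
  bound \<open>m ^ (n - g)\<close>.\<close>

lemma conflict_class:
  assumes G: "wf_graph G" and m: "1 \<le> m" and g: "1 \<le> g" and girth: "\<forall>k. has_cycle G k \<longrightarrow> g \<le> k"
    and F: "F \<subseteq> edges G"
  shows "exact_conflict_count G m F \<or> girth_cycle_count G m g F \<or> conflict_bound G m g F"
  using F
proof (induction "card F" arbitrary: F rule: less_induct)
  case less
  have finF: "finite F" using finite_subset[OF less.prems wf_graph_finite_edges[OF G]] .
  consider (empty) "F = {}"
    | (leaf) e v where "e \<in> F" "v \<in> e" "\<forall>e'\<in>F. v \<in> e' \<longrightarrow> e' = e"
    | (no_leaf) "F \<noteq> {}" "\<forall>e\<in>F. \<forall>v\<in>e. \<exists>e'\<in>F. v \<in> e' \<and> e' \<noteq> e"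
    by blast
  then show ?case
  proof cases
    case empty
    then show ?thesis using exact_conflict_count_empty[OF G] by blast
  next
    case leaf
    have eE: "e \<in> edges G" using leaf(1) less.prems by blast
    obtain u where u: "e = {v, u}" "u \<noteq> v" by (rule wf_graph_edge_other_end[OF G eE leaf(2)])
    let ?F0 = "F - {e}"
    have F: "F = insert {u, v} ?F0" and uvE: "{u, v} \<in> edges G"
      using leaf(1) eE u(1) by (auto simp: insert_commute)
    have v_new: "\<forall>e'\<in>?F0. v \<notin> e'" using leaf(3) by blast
    have "card ?F0 < card F" using finF leaf(1) by (rule card_Diff1_less)
    then have "exact_conflict_count G m ?F0 \<or> girth_cycle_count G m g ?F0 \<or> conflict_bound G m g ?F0"
      using less.hyps less.prems by blast
    moreover note leaf_rules = exact_conflict_count_add_leaf[OF G uvE u(2) v_new]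
      conflict_bound_add_leaf[OF G uvE u(2) v_new]
    ultimately have "exact_conflict_count G m F \<or> conflict_bound G m (Suc (g - 1)) F \<or>
                       conflict_bound G m (Suc g) F"
      using finF unfolding girth_cycle_count_def by (subst (1 2 3) F) (auto intro: leaf_rules)
    then show ?thesis using g conflict_bound_weaken[OF m, of g "Suc g" G F] by auto
  next
    case no_leaf
    then show ?thesis using conflict_class_without_leaves[OF G m girth less.prems] by blast
  qed
qed

section \<open>Inclusion-exclusion\<close>

lemma prod_of_bool: "finite A \<Longrightarrow> (\<Prod>x\<in>A. of_bool (P x)) = (of_bool (\<forall>x\<in>A. P x) :: 'b::comm_semiring_1)"
  by (induction A rule: finite_induct) auto

lemma card_conflict_free_assignments_inclusion_exclusion:
  assumes "finite V" "\<And>u. u \<in> V \<Longrightarrow> finite (X u)" "finite E"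
  shows "int (card (conflict_free_assignments V X R E))
           = (\<Sum>F\<in>Pow E. (-1) ^ card F * int (card (conflicting_assignments V X R F)))"
proof -
  let ?C = "Pi\<^sub>E V X" and ?\<chi> = "\<lambda>c e. of_bool (conflicts R c e) :: int"
  have finC: "finite ?C" by (rule finite_PiE[OF assms(1)]) (rule assms(2))
  have count: "int (card {c \<in> ?C. \<forall>e\<in>F. P c e}) = (\<Sum>c\<in>?C. \<Prod>e\<in>F. of_bool (P c e))"
    if "finite F" for F P
  proof -
    have "(\<Sum>c\<in>?C. \<Prod>e\<in>F. of_bool (P c e)) = (\<Sum>c\<in>?C. of_bool (\<forall>e\<in>F. P c e) :: int)"
      using that by (simp only: prod_of_bool)
    also have "\<dots> = int (card (?C \<inter> {c. \<forall>e\<in>F. P c e}))"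
      using finC by simp
    finally show ?thesis by (simp only: Collect_conj_eq Collect_mem_eq)
  qed
  have expand: "(\<Prod>e\<in>E. 1 - ?\<chi> c e) = (\<Sum>F\<in>Pow E. (-1) ^ card F * (\<Prod>e\<in>F. ?\<chi> c e))" for c
  proof -
    have "(\<Prod>e\<in>E. 1 - ?\<chi> c e) = (\<Prod>e\<in>E. - ?\<chi> c e + 1)" by simp
    also have "\<dots> = (\<Sum>F\<in>Pow E. (\<Prod>e\<in>F. - ?\<chi> c e) * (\<Prod>e\<in>E - F. 1))"
      by (rule prod_add[OF assms(3)])
    finally show ?thesis by (simp add: prod_uminus)
  qed
  have "int (card (conflict_free_assignments V X R E)) = (\<Sum>c\<in>?C. \<Prod>e\<in>E. 1 - ?\<chi> c e)"
    unfolding conflict_free_assignments_def using count[OF assms(3), of "\<lambda>c e. \<not> conflicts R c e"]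
    by (simp add: of_bool_not_iff)
  also have "\<dots> = (\<Sum>F\<in>Pow E. (-1) ^ card F * (\<Sum>c\<in>?C. \<Prod>e\<in>F. ?\<chi> c e))"
    unfolding expand by (subst sum.swap) (simp add: sum_distrib_left)
  also have "\<dots> = (\<Sum>F\<in>Pow E. (-1) ^ card F * int (card (conflicting_assignments V X R F)))"
    unfolding conflicting_assignments_def using assms(3)
    by (intro sum.cong refl) (simp add: count finite_subset)
  finally show ?thesis .
qed

lemma chrom_poly_eq_card_conflict_free_assignments:
  "chrom_poly G m = card (conflict_free_assignments (verts G) (\<lambda>_. {1..m}) equal_colours (edges G))"
proof -
  have "(\<forall>u v. {u, v} \<in> edges G \<longrightarrow> u \<noteq> v \<longrightarrow> f u \<noteq> f v) \<longleftrightarrow>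
          (\<forall>e\<in>edges G. \<not> conflicts equal_colours f e)" for f :: "'a \<Rightarrow> nat"
    unfolding conflicts_def by blast
  then show ?thesis unfolding chrom_poly_def conflict_free_assignments_def by simp
qed

lemma real_le_power_int_diff:
  assumes "x * m ^ k \<le> m ^ n" "1 \<le> m"
  shows "real x \<le> real m powi (int n - int k)"
proof -
  have "real x * real m ^ k \<le> real m ^ n" using assms(1) by (metis of_nat_le_iff of_nat_mult of_nat_power)
  then show ?thesis using assms(2) by (simp add: power_int_diff field_simps)
qed

lemma signed_conflict_count_difference_le:
  assumes G: "wf_graph G" and m: "1 \<le> m" and g: "odd g" and girth: "\<forall>k. has_cycle G k \<longrightarrow> g \<le> k"
    and sys: "perfect_matching_system G m X R" and F: "F \<subseteq> edges G"
  shows "real_of_int ((-1) ^ card F * (int (card (conflicting_assignments (verts G) (\<lambda>_. {1..m}) equal_colours F))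
                         - int (card (conflicting_assignments (verts G) X R F))))
           \<le> real m powi (int (card (verts G)) - int g)"
    (is "real_of_int ((-1) ^ card F * (int ?a - int ?b)) \<le> ?M")
proof -
  have ms: "matching_system G m X R" "matching_system G m (\<lambda>_. {1..m}) equal_colours"
    using sys perfect_matching_system_equal_colours unfolding perfect_matching_system_def by blast+
  have "0 \<le> ?M" by simp
  consider "exact_conflict_count G m F" | "girth_cycle_count G m g F" | "conflict_bound G m g F"
    using conflict_class[OF G m _ girth F] g by (cases g) auto
  then show ?thesis
  proof cases
    case 1
    then have "?a * m ^ card F = ?b * m ^ card F"
      using sys perfect_matching_system_equal_colours unfolding exact_conflict_count_def by metis
    then show ?thesis using m \<open>0 \<le> ?M\<close> by simp
  next
    case 2
    then have "?b * m ^ (g - 1) \<le> ?a * m ^ (g - 1)" "card F = g"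
      using ms(1) unfolding girth_cycle_count_def conflict_bound_def by auto
    then have "?b \<le> ?a" "(-1::int) ^ card F = -1" using m g by simp_all
    then have "real_of_int ((-1) ^ card F * (int ?a - int ?b)) \<le> 0" by simp
    then show ?thesis using \<open>0 \<le> ?M\<close> by linarith
  next
    case 3
    then have "?a * m ^ g \<le> m ^ card (verts G)" "?b * m ^ g \<le> m ^ card (verts G)"
      using ms unfolding conflict_bound_def by blast+
    then have "real ?a \<le> ?M" "real ?b \<le> ?M" using real_le_power_int_diff m by blast+
    then show ?thesis by (cases "even (card F)") auto
  qed
qed

text \<open>Only the \<open>g\<close>-cycles contribute terms of order \<open>m ^ (n - g + 1)\<close>, and since \<open>g\<close> is odd these
  enter with the sign that favours ordinary colouring.\<close>

lemma chrom_poly_minus_card_conflict_free_le: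
  assumes G: "wf_graph G" and m: "1 \<le> m" and g: "odd g" and girth: "\<forall>k. has_cycle G k \<longrightarrow> g \<le> k"
    and sys: "perfect_matching_system G m X R"
  shows "real (chrom_poly G m) - real (card (conflict_free_assignments (verts G) X R (edges G)))
           \<le> 2 ^ card (edges G) * real m powi (int (card (verts G)) - int g)"
proof -
  let ?V = "verts G" and ?E = "edges G"
  let ?a = "\<lambda>F. int (card (conflicting_assignments ?V (\<lambda>_. {1..m}) equal_colours F))"
    and ?b = "\<lambda>F. int (card (conflicting_assignments ?V X R F))"
  have fin: "finite ?V" "finite ?E" using G by (simp_all add: wf_graph_finite_verts wf_graph_finite_edges)
  have "int (chrom_poly G m) = (\<Sum>F\<in>Pow ?E. (-1) ^ card F * ?a F)"
    unfolding chrom_poly_eq_card_conflict_free_assignments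
    by (rule card_conflict_free_assignments_inclusion_exclusion[OF fin(1) _ fin(2)]) simp
  moreover have "int (card (conflict_free_assignments ?V X R ?E)) = (\<Sum>F\<in>Pow ?E. (-1) ^ card F * ?b F)"
    using sys unfolding perfect_matching_system_def
    by (intro card_conflict_free_assignments_inclusion_exclusion[OF fin(1) _ fin(2)] matching_system_finite) blast+
  ultimately have "int (chrom_poly G m) - int (card (conflict_free_assignments ?V X R ?E))
                     = (\<Sum>F\<in>Pow ?E. (-1) ^ card F * (?a F - ?b F))"
    by (simp only: right_diff_distrib sum_subtractf)
  then have "real (chrom_poly G m) - real (card (conflict_free_assignments ?V X R ?E))
               = real_of_int (\<Sum>F\<in>Pow ?E. (-1) ^ card F * (?a F - ?b F))"
    by (metis of_int_diff of_int_of_nat_eq)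
  also have "\<dots> = (\<Sum>F\<in>Pow ?E. real_of_int ((-1) ^ card F * (?a F - ?b F)))"
    by (rule of_int_sum)
  also have "\<dots> \<le> (\<Sum>F\<in>Pow ?E. real m powi (int (card ?V) - int g))"
    by (intro sum_mono signed_conflict_count_difference_le[OF G m g girth sys]) blast
  also have "\<dots> = 2 ^ card ?E * real m powi (int (card ?V) - int g)"
    using fin(2) by (simp add: card_Pow)
  finally show ?thesis .
qed

section \<open>Covers as colour systems\<close>

abbreviation joined_in :: "nat graph \<Rightarrow> 'a \<Rightarrow> nat \<Rightarrow> 'a \<Rightarrow> nat \<Rightarrow> bool" where
  "joined_in H u a v b \<equiv> {a, b} \<in> edges H"

lemma is_coverD:
  assumes "is_cover G L H"
  shows "wf_graph H" and "(\<Union>u\<in>verts G. L u) = verts H"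
    and "\<And>u v. u \<in> verts G \<Longrightarrow> v \<in> verts G \<Longrightarrow> u \<noteq> v \<Longrightarrow> L u \<inter> L v = {}"
    and "\<And>u x y. u \<in> verts G \<Longrightarrow> x \<in> L u \<Longrightarrow> y \<in> L u \<Longrightarrow> x \<noteq> y \<Longrightarrow> {x, y} \<in> edges H"
    and "\<And>u v x y. u \<in> verts G \<Longrightarrow> v \<in> verts G \<Longrightarrow> x \<in> L u \<Longrightarrow> y \<in> L v \<Longrightarrow> {x, y} \<in> edges H \<Longrightarrow>
           u = v \<or> {u, v} \<in> edges G"
    and "\<And>u v. u \<in> verts G \<Longrightarrow> v \<in> verts G \<Longrightarrow> {u, v} \<in> edges G \<Longrightarrow> u \<noteq> v \<Longrightarrow>
           is_matching (cross_edges H (L u) (L v))"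
proof -
  show "wf_graph H" "(\<Union>u\<in>verts G. L u) = verts H"
    using assms unfolding is_cover_def by simp_all
  show "\<And>u v. u \<in> verts G \<Longrightarrow> v \<in> verts G \<Longrightarrow> u \<noteq> v \<Longrightarrow> L u \<inter> L v = {}"
    and "\<And>u x y. u \<in> verts G \<Longrightarrow> x \<in> L u \<Longrightarrow> y \<in> L u \<Longrightarrow> x \<noteq> y \<Longrightarrow> {x, y} \<in> edges H"
    and "\<And>u v. u \<in> verts G \<Longrightarrow> v \<in> verts G \<Longrightarrow> {u, v} \<in> edges G \<Longrightarrow> u \<noteq> v \<Longrightarrow>
           is_matching (cross_edges H (L u) (L v))"
    using assms unfolding is_cover_def by meson+
  fix u v x y
  assume uv: "u \<in> verts G" "v \<in> verts G" and xy: "x \<in> L u" "y \<in> L v" "{x, y} \<in> edges H"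
  then have "cross_edges H (L u) (L v) \<noteq> {}" unfolding cross_edges_def by blast
  then show "u = v \<or> {u, v} \<in> edges G" using assms uv unfolding is_cover_def by meson
qed

lemma wf_graph_no_loop:
  assumes "wf_graph H"
  shows "{x} \<notin> edges H"
proof
  assume "{x} \<in> edges H"
  then obtain a b where "a \<noteq> b" "{x} = {a, b}" using assms by (meson wf_graph_edgeE)
  then show False by (simp add: doubleton_eq_iff)
qed

lemma is_matchingD: "is_matching M \<Longrightarrow> e \<in> M \<Longrightarrow> e' \<in> M \<Longrightarrow> e \<noteq> e' \<Longrightarrow> e \<inter> e' = {}"
  unfolding is_matching_def by blast

lemma matching_system_cover:
  assumes "is_mfold_cover G m L H"
  shows "matching_system G m L (joined_in H)"
proof -
  have C: "is_cover G L H" using assms unfolding is_mfold_cover_def by blast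
  have unique: "b = b'"
    if uv: "u \<in> verts G" "v \<in> verts G" "u \<noteq> v" "{u, v} \<in> edges G"
      and ab: "a \<in> L u" "b \<in> L v" "b' \<in> L v" "{a, b} \<in> edges H" "{a, b'} \<in> edges H" for u v a b b'
  proof (rule ccontr)
    assume "b \<noteq> b'"
    moreover have "a \<noteq> b" using is_coverD(3)[OF C uv(1-3)] ab(1,2) by blast
    ultimately have ne: "{a, b} \<noteq> {a, b'}" by (simp add: doubleton_eq_iff)
    have cross: "{a, b} \<in> cross_edges H (L u) (L v)" "{a, b'} \<in> cross_edges H (L u) (L v)"
      unfolding cross_edges_def using ab by blast+
    have "{a, b} \<inter> {a, b'} = {}" by (rule is_matchingD[OF is_coverD(6)[OF C uv(1,2,4,3)] cross ne])
    then show False by simp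
  qed
  have "\<forall>u\<in>verts G. finite (L u) \<and> card (L u) = m"
    using assms unfolding is_mfold_cover_def by blast
  moreover have "\<forall>u a v b. joined_in H u a v b \<longrightarrow> joined_in H v b u a"
    by (simp add: insert_commute)
  moreover have "\<forall>u\<in>verts G. \<forall>v\<in>verts G. u \<noteq> v \<longrightarrow> {u, v} \<in> edges G \<longrightarrow>
                   (\<forall>a\<in>L u. \<forall>b\<in>L v. \<forall>b'\<in>L v. joined_in H u a v b \<longrightarrow> joined_in H u a v b' \<longrightarrow> b = b')"
    using unique by blast
  ultimately show ?thesis unfolding matching_system_def by blast
qed

text \<open>The lists are cliques partitioning \<open>V(H)\<close>, so an independent set meets each at most once;
  counting forces exactly once.\<close>

lemma independent_meets_each_list_once:
  assumes G: "wf_graph G" and C: "is_mfold_cover G m L H"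
    and I: "independent H I" "card I = card (verts G)" and u: "u \<in> verts G"
  shows "\<exists>x. I \<inter> L u = {x}"
proof -
  let ?V = "verts G"
  have cover: "is_cover G L H" and finL: "\<And>u. u \<in> ?V \<Longrightarrow> finite (L u)"
    using C unfolding is_mfold_cover_def by auto
  have at_most_one: "card (I \<inter> L w) \<le> 1" if w: "w \<in> ?V" for w
  proof -
    have "x = y" if "x \<in> I \<inter> L w" "y \<in> I \<inter> L w" for x y
      using that I(1) is_coverD(4)[OF cover w] unfolding independent_def by blast
    then show ?thesis using finL[OF w] by (simp add: card_le_Suc0_iff_eq)
  qed
  have "I = (\<Union>w\<in>?V. I \<inter> L w)" using I(1) is_coverD(2)[OF cover] unfolding independent_def by blast
  also have "card \<dots> = (\<Sum>w\<in>?V. card (I \<inter> L w))"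
    using is_coverD(3)[OF cover] finL wf_graph_finite_verts[OF G] by (intro card_UN_disjoint) auto
  finally have sum_eq: "(\<Sum>w\<in>?V. card (I \<inter> L w)) = (\<Sum>w\<in>?V. 1)" using I(2) by simp
  have "card (I \<inter> L u) = 1"
  proof (rule ccontr)
    assume "card (I \<inter> L u) \<noteq> 1"
    then have "card (I \<inter> L u) < 1" using at_most_one[OF u] by linarith
    then have "(\<Sum>w\<in>?V. card (I \<inter> L w)) < (\<Sum>w\<in>?V. 1)"
      using sum_strict_mono_ex1[OF wf_graph_finite_verts[OF G], of "\<lambda>w. card (I \<inter> L w)" "\<lambda>_. 1"]
        at_most_one u by blast
    then show False using sum_eq by simp
  qed
  then show ?thesis by (meson card_1_singletonE)
qed

lemma inj_on_image_PiE_disjoint: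
  assumes disjoint: "\<And>u w. u \<in> V \<Longrightarrow> w \<in> V \<Longrightarrow> u \<noteq> w \<Longrightarrow> L u \<inter> L w = {}"
  shows "inj_on (\<lambda>c. c ` V) (Pi\<^sub>E V L)"
proof (rule inj_onI)
  fix c c' assume c: "c \<in> Pi\<^sub>E V L" "c' \<in> Pi\<^sub>E V L" and eq: "c ` V = c' ` V"
  show "c = c'"
  proof (rule PiE_ext[OF c])
    fix u assume u: "u \<in> V"
    then have "c u \<in> c ` V" by (rule imageI)
    then have "c u \<in> c' ` V" by (simp only: eq)
    then obtain w where w: "w \<in> V" "c u = c' w" by (rule imageE)
    have "c u \<in> L u" "c' w \<in> L w" using PiE_mem c u w(1) by metis+
    then have "u = w" using disjoint[OF u w(1)] w(2) by auto
    then show "c u = c' u" using w(2) by simp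
  qed
qed

lemma independent_image_conflict_free_assignment:
  assumes cover: "is_cover G L H" and c: "c \<in> conflict_free_assignments (verts G) L (joined_in H) (edges G)"
  shows "independent H (c ` verts G)" "card (c ` verts G) = card (verts G)"
proof -
  let ?V = "verts G"
  have in_L: "c u \<in> L u" if "u \<in> ?V" for u using c that unfolding conflict_free_assignments_def by auto
  have "{c u, c w} \<notin> edges H" if uw: "u \<in> ?V" "w \<in> ?V" for u w
  proof
    assume edge: "{c u, c w} \<in> edges H"
    consider "u = w" | "u \<noteq> w" "{u, w} \<in> edges G"
      using is_coverD(5)[OF cover uw in_L[OF uw(1)] in_L[OF uw(2)] edge] by blast
    then show False
    proof cases
      case 1
      then show False using edge wf_graph_no_loop[OF is_coverD(1)[OF cover]] by simp
    next
      case 2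
      then have "conflicts (joined_in H) c {u, w}" unfolding conflicts_def using edge by blast
      then show False using c 2(2) unfolding conflict_free_assignments_def by blast
    qed
  qed
  moreover have "c ` ?V \<subseteq> verts H" using in_L is_coverD(2)[OF cover] by blast
  ultimately show "independent H (c ` ?V)" unfolding independent_def by blast
  have "inj_on c ?V"
  proof (rule inj_onI)
    fix u w assume uw: "u \<in> ?V" "w \<in> ?V" and eq: "c u = c w"
    have "c u \<in> L u" "c u \<in> L w" using in_L[OF uw(1)] in_L[OF uw(2)] eq by simp_all
    then show "u = w" using is_coverD(3)[OF cover uw] by blast
  qed
  then show "card (c ` ?V) = card ?V" by (rule card_image)
qed

lemma conflict_free_assignment_of_independent:
  assumes G: "wf_graph G" and C: "is_mfold_cover G m L H"
    and I: "independent H I" "card I = card (verts G)"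
  shows "I \<in> (\<lambda>c. c ` verts G) ` conflict_free_assignments (verts G) L (joined_in H) (edges G)"
proof -
  let ?V = "verts G"
  have cover: "is_cover G L H" using C unfolding is_mfold_cover_def by blast
  define c where "c = (\<lambda>u. if u \<in> ?V then THE x. I \<inter> L u = {x} else undefined)"
  have c: "I \<inter> L u = {c u}" if u: "u \<in> ?V" for u
  proof -
    obtain x where x: "I \<inter> L u = {x}" using independent_meets_each_list_once[OF G C I u] by blast
    then have "(THE x. I \<inter> L u = {x}) = x" by (intro the_equality) auto
    then show ?thesis using x u unfolding c_def by simp
  qed
  have PiE: "c \<in> Pi\<^sub>E ?V L"
  proof (rule PiE_I)
    show "c u \<in> L u" if "u \<in> ?V" for u using c[OF that] by blast
    show "c u = undefined" if "u \<notin> ?V" for u using that unfolding c_def by simp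
  qed
  have free: "\<not> conflicts (joined_in H) c e" if e: "e \<in> edges G" for e
  proof
    assume "conflicts (joined_in H) c e"
    then obtain u w where uw: "e = {u, w}" "{c u, c w} \<in> edges H" unfolding conflicts_def by blast
    then have "u \<in> ?V" "w \<in> ?V" using wf_graph_edge_subset[OF G e] by auto
    then have "c u \<in> I" "c w \<in> I" using c by blast+
    then show False using I(1) uw(2) unfolding independent_def by blast
  qed
  have "I \<subseteq> c ` ?V"
  proof
    fix x assume x: "x \<in> I"
    then obtain u where "u \<in> ?V" "x \<in> L u"
      using I(1) is_coverD(2)[OF cover] unfolding independent_def by blast
    then show "x \<in> c ` ?V" using c x by blast
  qed
  then have img: "I = c ` ?V" using c by blast
  have "c \<in> conflict_free_assignments ?V L (joined_in H) (edges G)"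
    unfolding conflict_free_assignments_def using PiE free by blast
  then show ?thesis using img by (intro image_eqI[where f = "\<lambda>c. c ` ?V"])
qed

text \<open>A DP-colouring picks one vertex from each list \<open>L u\<close>, i.e. it is the image of a
  conflict-free assignment.\<close>

lemma P_DP_cover_eq_card_conflict_free_assignments:
  assumes G: "wf_graph G" and C: "is_mfold_cover G m L H"
  shows "P_DP_cover G H = card (conflict_free_assignments (verts G) L (joined_in H) (edges G))"
proof -
  let ?V = "verts G" and ?N = "conflict_free_assignments (verts G) L (joined_in H) (edges G)"
  have cover: "is_cover G L H" using C unfolding is_mfold_cover_def by blast
  have "?N \<subseteq> Pi\<^sub>E ?V L" unfolding conflict_free_assignments_def by blast
  with inj_on_image_PiE_disjoint[OF is_coverD(3)[OF cover]] have "inj_on (\<lambda>c. c ` ?V) ?N"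
    by (rule inj_on_subset)
  moreover have "(\<lambda>c. c ` ?V) ` ?N = {I. independent H I \<and> card I = card ?V}"
  proof (intro equalityI subsetI)
    fix I assume "I \<in> (\<lambda>c. c ` ?V) ` ?N"
    then obtain c where "c \<in> ?N" "I = c ` ?V" by blast
    then show "I \<in> {I. independent H I \<and> card I = card ?V}"
      using independent_image_conflict_free_assignment[OF cover] by simp
  next
    fix I assume "I \<in> {I. independent H I \<and> card I = card ?V}"
    then show "I \<in> (\<lambda>c. c ` ?V) ` ?N" using conflict_free_assignment_of_independent[OF G C] by simp
  qed
  ultimately have "bij_betw (\<lambda>c. c ` ?V) ?N {I. independent H I \<and> card I = card ?V}"
    unfolding bij_betw_def by blast
  then show ?thesis unfolding P_DP_cover_def by (simp add: bij_betw_same_card)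
qed

section \<open>Completing a cover to a perfect one\<close>

lemma partial_matching_extends_to_bij:
  assumes fin: "finite A" "finite B" "card A = card B"
    and left_unique: "\<And>a b b'. a \<in> A \<Longrightarrow> b \<in> B \<Longrightarrow> b' \<in> B \<Longrightarrow> M a b \<Longrightarrow> M a b' \<Longrightarrow> b = b'"
    and right_unique: "\<And>a a' b. a \<in> A \<Longrightarrow> a' \<in> A \<Longrightarrow> b \<in> B \<Longrightarrow> M a b \<Longrightarrow> M a' b \<Longrightarrow> a = a'"
  obtains \<sigma> where "bij_betw \<sigma> A B" "\<And>a b. a \<in> A \<Longrightarrow> b \<in> B \<Longrightarrow> M a b \<Longrightarrow> \<sigma> a = b"
proof -
  define A1 where "A1 = {a \<in> A. \<exists>b\<in>B. M a b}"
  define f where "f = (\<lambda>a. SOME b. b \<in> B \<and> M a b)"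
  have f: "f a \<in> B \<and> M a (f a)" if "a \<in> A1" for a
  proof -
    have "\<exists>b. b \<in> B \<and> M a b" using that unfolding A1_def by blast
    then show ?thesis unfolding f_def by (rule someI_ex)
  qed
  have "A1 \<subseteq> A" unfolding A1_def by blast
  have "inj_on f A1"
  proof (rule inj_onI)
    fix a a' assume "a \<in> A1" "a' \<in> A1" "f a = f a'"
    then show "a = a'" using f[of a] f[of a'] right_unique \<open>A1 \<subseteq> A\<close> by (metis subsetD)
  qed
  then have matched: "bij_betw f A1 (f ` A1)" by (simp add: bij_betw_imageI)
  have "f ` A1 \<subseteq> B" using f by blast
  have "card (A - A1) = card (B - f ` A1)"
    using fin \<open>A1 \<subseteq> A\<close> \<open>f ` A1 \<subseteq> B\<close> \<open>inj_on f A1\<close>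
    by (simp add: card_Diff_subset card_image finite_subset)
  then obtain h where unmatched: "bij_betw h (A - A1) (B - f ` A1)"
    using fin(1,2) by (metis finite_Diff finite_same_card_bij)
  define \<sigma> where "\<sigma> = (\<lambda>a. if a \<in> A1 then f a else h a)"
  have "bij_betw \<sigma> (A1 \<union> (A - A1)) (f ` A1 \<union> (B - f ` A1))"
    unfolding \<sigma>_def
    by (rule bij_betw_combine[OF bij_betw_cong[THEN iffD1, OF _ matched] bij_betw_cong[THEN iffD1, OF _ unmatched]])
      auto
  moreover have "A1 \<union> (A - A1) = A" "f ` A1 \<union> (B - f ` A1) = B"
    using \<open>A1 \<subseteq> A\<close> \<open>f ` A1 \<subseteq> B\<close> by blast+
  moreover have "\<sigma> a = b" if "a \<in> A" "b \<in> B" "M a b" for a b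
  proof -
    have "a \<in> A1" using that unfolding A1_def by blast
    then show ?thesis unfolding \<sigma>_def using f left_unique that by auto
  qed
  ultimately show ?thesis using that by simp
qed

lemma matching_system_extending_bijections:
  assumes sys: "matching_system G m X R"
  obtains S where "\<And>u v. u \<in> verts G \<Longrightarrow> v \<in> verts G \<Longrightarrow> u \<noteq> v \<Longrightarrow> {u, v} \<in> edges G \<Longrightarrow>
      bij_betw (S u v) (X u) (X v) \<and> (\<forall>a\<in>X u. \<forall>b\<in>X v. R u a v b \<longrightarrow> S u v a = b)"
proof -
  have "\<exists>\<sigma>. bij_betw \<sigma> (X u) (X v) \<and> (\<forall>a\<in>X u. \<forall>b\<in>X v. R u a v b \<longrightarrow> \<sigma> a = b)"
    if uv: "u \<in> verts G" "v \<in> verts G" "u \<noteq> v" "{u, v} \<in> edges G" for u v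
  proof -
    have vu: "{v, u} \<in> edges G" using uv(4) by (simp add: insert_commute)
    have sym: "\<And>u a v b. R u a v b \<Longrightarrow> R v b u a" using sys unfolding matching_system_def by blast
    have unique: "\<And>u v a b b'. u \<in> verts G \<Longrightarrow> v \<in> verts G \<Longrightarrow> u \<noteq> v \<Longrightarrow> {u, v} \<in> edges G \<Longrightarrow>
        a \<in> X u \<Longrightarrow> b \<in> X v \<Longrightarrow> b' \<in> X v \<Longrightarrow> R u a v b \<Longrightarrow> R u a v b' \<Longrightarrow> b = b'"
      using sys unfolding matching_system_def by blast
    have fin: "finite (X u)" "finite (X v)" "card (X u) = card (X v)"
      using sys uv unfolding matching_system_def by auto
    have "b = b'" if "a \<in> X u" "b \<in> X v" "b' \<in> X v" "R u a v b" "R u a v b'" for a b b'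
      using unique[OF uv] that by blast
    moreover have "a = a'" if "a \<in> X u" "a' \<in> X u" "b \<in> X v" "R u a v b" "R u a' v b" for a a' b
      using unique[OF uv(2,1) uv(3)[symmetric] vu] that sym by blast
    ultimately obtain \<sigma> where "bij_betw \<sigma> (X u) (X v)" "\<And>a b. a \<in> X u \<Longrightarrow> b \<in> X v \<Longrightarrow> R u a v b \<Longrightarrow> \<sigma> a = b"
      using partial_matching_extends_to_bij[OF fin, of "\<lambda>a b. R u a v b"] by blast
    then show ?thesis by blast
  qed
  then show ?thesis using that by metis
qed

text \<open>Along an edge \<open>{u, v}\<close> with \<open>idx u < idx v\<close>, colour \<open>a\<close> at \<open>u\<close> is joined to \<open>S u v a\<close> at
  \<open>v\<close>; orienting by the injective numbering \<open>idx\<close> makes the relation symmetric.\<close>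

definition oriented_matching ::
    "'a graph \<Rightarrow> ('a \<Rightarrow> nat set) \<Rightarrow> ('a \<Rightarrow> nat) \<Rightarrow> ('a \<Rightarrow> 'a \<Rightarrow> nat \<Rightarrow> nat) \<Rightarrow> 'a \<Rightarrow> nat \<Rightarrow> 'a \<Rightarrow> nat \<Rightarrow> bool"
  where
  "oriented_matching G X idx S u a v b \<longleftrightarrow>
     u \<in> verts G \<and> v \<in> verts G \<and> u \<noteq> v \<and> {u, v} \<in> edges G \<and> a \<in> X u \<and> b \<in> X v \<and>
     (if idx u < idx v then S u v a = b else S v u b = a)"

lemma perfect_matching_system_oriented_matching:
  assumes X: "\<And>u. u \<in> verts G \<Longrightarrow> finite (X u) \<and> card (X u) = m" and idx: "inj_on idx (verts G)"
    and S: "\<And>u v. u \<in> verts G \<Longrightarrow> v \<in> verts G \<Longrightarrow> u \<noteq> v \<Longrightarrow> {u, v} \<in> edges G \<Longrightarrow>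
              bij_betw (S u v) (X u) (X v)"
  shows "perfect_matching_system G m X (oriented_matching G X idx S)"
proof -
  let ?R = "oriented_matching G X idx S"
  have edge_sym: "{v, u} \<in> edges G \<longleftrightarrow> {u, v} \<in> edges G" for u v by (simp add: insert_commute)
  have sym: "?R v b u a" if r: "?R u a v b" for u a v b
  proof -
    have "idx u \<noteq> idx v" using r idx unfolding oriented_matching_def by (meson inj_on_eq_iff)
    then show ?thesis using r unfolding oriented_matching_def by (auto simp: edge_sym)
  qed
  have S_vu: "bij_betw (S v u) (X v) (X u)"
    if "u \<in> verts G" "v \<in> verts G" "u \<noteq> v" "{u, v} \<in> edges G" for u v
    using S[of v u] that by (simp add: edge_sym)
  show ?thesis
    unfolding perfect_matching_system_def matching_system_def
  proof (intro conjI ballI allI impI)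
    show "finite (X u)" "card (X u) = m" if "u \<in> verts G" for u using X[OF that] by simp_all
    show "?R v b u a" if "?R u a v b" for u a v b using sym[OF that] .
  next
    fix u v a b b'
    assume uv: "u \<in> verts G" "v \<in> verts G" "u \<noteq> v" "{u, v} \<in> edges G"
      and "a \<in> X u" "b \<in> X v" "b' \<in> X v" "?R u a v b" "?R u a v b'"
    then show "b = b'" using bij_betw_imp_inj_on[OF S_vu[OF uv]] unfolding oriented_matching_def
      by (auto split: if_splits dest: inj_onD)
  next
    fix u v a
    assume uv: "u \<in> verts G" "v \<in> verts G" "u \<noteq> v" "{u, v} \<in> edges G" and a: "a \<in> X u"
    show "\<exists>b\<in>X v. ?R u a v b"
    proof (cases "idx u < idx v")
      case True
      then show ?thesis using S[OF uv] a uv unfolding oriented_matching_def by (auto intro: bij_betw_apply)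
    next
      case False
      obtain b where "b \<in> X v" "S v u b = a" using S_vu[OF uv] a by (metis bij_betw_iff_bijections)
      then show ?thesis using False a uv unfolding oriented_matching_def by auto
    qed
  qed
qed

lemma conflicts_oriented_matching:
  assumes G: "wf_graph G" and sys: "matching_system G m X R"
    and S: "\<And>u v a b. u \<in> verts G \<Longrightarrow> v \<in> verts G \<Longrightarrow> u \<noteq> v \<Longrightarrow> {u, v} \<in> edges G \<Longrightarrow>
              a \<in> X u \<Longrightarrow> b \<in> X v \<Longrightarrow> R u a v b \<Longrightarrow> S u v a = b"
    and c: "c \<in> Pi\<^sub>E (verts G) X" and e: "e \<in> edges G" "conflicts R c e"
  shows "conflicts (oriented_matching G X idx S) c e"
proof -
  obtain u v where uv: "e = {u, v}" "u \<noteq> v" "R u (c u) v (c v)"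
    using e(2) unfolding conflicts_def by blast
  have V: "u \<in> verts G" "v \<in> verts G" using wf_graph_edge_subset[OF G e(1)] uv(1) by auto
  have E: "{u, v} \<in> edges G" "{v, u} \<in> edges G" using e(1) uv(1) by (auto simp: insert_commute)
  have X: "c u \<in> X u" "c v \<in> X v" using c V by auto
  have "R v (c v) u (c u)" using sys uv(3) unfolding matching_system_def by blast
  then have "oriented_matching G X idx S u (c u) v (c v)"
    using S[OF V uv(2) E(1) X uv(3)] S[OF V(2,1) uv(2)[symmetric] E(2) X(2,1)] V E X uv(2)
    unfolding oriented_matching_def by simp
  then show ?thesis unfolding conflicts_def using uv(1,2) by blast
qed

text \<open>Filling every partial matching up to a perfect one creates conflicts only, so it can
  only destroy conflict-free assignments.\<close>

lemma perfect_matching_system_completion: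
  assumes G: "wf_graph G" and sys: "matching_system G m X R"
  obtains R' where "perfect_matching_system G m X R'"
    "conflict_free_assignments (verts G) X R' (edges G) \<subseteq> conflict_free_assignments (verts G) X R (edges G)"
proof -
  obtain S where S: "\<And>u v. u \<in> verts G \<Longrightarrow> v \<in> verts G \<Longrightarrow> u \<noteq> v \<Longrightarrow> {u, v} \<in> edges G \<Longrightarrow>
      bij_betw (S u v) (X u) (X v) \<and> (\<forall>a\<in>X u. \<forall>b\<in>X v. R u a v b \<longrightarrow> S u v a = b)"
    using matching_system_extending_bijections[OF sys] by blast
  obtain idx :: "'a \<Rightarrow> nat" where idx: "inj_on idx (verts G)"
    using finite_imp_inj_to_nat_seg[OF wf_graph_finite_verts[OF G]] by blast
  have "perfect_matching_system G m X (oriented_matching G X idx S)"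
    using sys S by (intro perfect_matching_system_oriented_matching idx) (auto simp: matching_system_def)
  moreover have "conflict_free_assignments (verts G) X (oriented_matching G X idx S) (edges G)
                   \<subseteq> conflict_free_assignments (verts G) X R (edges G)"
    using conflicts_oriented_matching[OF G sys, of S] S unfolding conflict_free_assignments_def by blast
  ultimately show ?thesis using that by blast
qed

section \<open>The canonical cover\<close>

lemma card_conflict_free_assignments_relabel_le:
  assumes V: "finite V" "\<And>u. u \<in> V \<Longrightarrow> finite (Y u)" and E: "\<And>e. e \<in> E \<Longrightarrow> e \<subseteq> V"
    and \<phi>: "\<And>u. u \<in> V \<Longrightarrow> inj_on (\<phi> u) (X u)" "\<And>u a. u \<in> V \<Longrightarrow> a \<in> X u \<Longrightarrow> \<phi> u a \<in> Y u"
    and pull_back: "\<And>u v a b. {u, v} \<in> E \<Longrightarrow> u \<noteq> v \<Longrightarrow> u \<in> V \<Longrightarrow> v \<in> V \<Longrightarrow> a \<in> X u \<Longrightarrow> b \<in> X v \<Longrightarrow>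
                 R' u (\<phi> u a) v (\<phi> v b) \<Longrightarrow> R u a v b"
  shows "card (conflict_free_assignments V X R E) \<le> card (conflict_free_assignments V Y R' E)"
proof (rule card_inj_on_le)
  let ?relabel = "\<lambda>c. restrict (\<lambda>u. \<phi> u (c u)) V"
  show "finite (conflict_free_assignments V Y R' E)"
    unfolding conflict_free_assignments_def using V by (auto intro: finite_subset[OF _ finite_PiE])
  show "inj_on ?relabel (conflict_free_assignments V X R E)"
  proof (rule inj_onI)
    fix c c' assume c: "c \<in> conflict_free_assignments V X R E" "c' \<in> conflict_free_assignments V X R E"
      and eq: "?relabel c = ?relabel c'"
    have "c \<in> Pi\<^sub>E V X" "c' \<in> Pi\<^sub>E V X" using c unfolding conflict_free_assignments_def by blast+
    moreover have "c u = c' u" if "u \<in> V" for u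
      using fun_cong[OF eq, of u] that \<phi>(1)[OF that] calculation by (auto dest: inj_onD)
    ultimately show "c = c'" by (metis PiE_ext)
  qed
  show "?relabel ` conflict_free_assignments V X R E \<subseteq> conflict_free_assignments V Y R' E"
  proof clarify
    fix c assume c: "c \<in> conflict_free_assignments V X R E"
    then have cX: "c \<in> Pi\<^sub>E V X" and free: "\<forall>e\<in>E. \<not> conflicts R c e"
      unfolding conflict_free_assignments_def by blast+
    have "\<not> conflicts R' (?relabel c) e" if e: "e \<in> E" for e
    proof
      assume "conflicts R' (?relabel c) e"
      then obtain u v where uv: "e = {u, v}" "u \<noteq> v" "R' u (?relabel c u) v (?relabel c v)"
        unfolding conflicts_def by blast
      moreover have "u \<in> V" "v \<in> V" using E[OF e] uv(1) by auto
      moreover have "c u \<in> X u" "c v \<in> X v" using cX calculation(4,5) by auto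
      ultimately have "R u (c u) v (c v)" using pull_back e by simp
      then show False using free e uv(1,2) unfolding conflicts_def by blast
    qed
    moreover have "?relabel c \<in> Pi\<^sub>E V Y" using cX \<phi>(2) by auto
    ultimately show "?relabel c \<in> conflict_free_assignments V Y R' E"
      unfolding conflict_free_assignments_def by blast
  qed
qed

text \<open>The canonical cover realises ordinary colouring: vertex \<open>u\<close> gets the list
  \<open>{(u, 1), \<dots>, (u, m)}\<close>, encoded in \<open>nat\<close> via an injective numbering of the vertices, and
  \<open>(u, i)\<close> is joined to \<open>(v, i)\<close> along every edge of \<open>G\<close>.\<close>

definition canonical_label :: "('a \<Rightarrow> nat) \<Rightarrow> 'a \<Rightarrow> nat \<Rightarrow> nat" where
  "canonical_label idx u i = prod_encode (idx u, i)"

definition canonical_lists :: "('a \<Rightarrow> nat) \<Rightarrow> nat \<Rightarrow> 'a \<Rightarrow> nat set" where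
  "canonical_lists idx m u = canonical_label idx u ` {1..m}"

definition canonical_cover_graph :: "'a graph \<Rightarrow> ('a \<Rightarrow> nat) \<Rightarrow> nat \<Rightarrow> nat graph" where
  "canonical_cover_graph G idx m =
     ((\<Union>u\<in>verts G. canonical_lists idx m u),
      {{canonical_label idx u i, canonical_label idx v j} | u i v j.
         u \<in> verts G \<and> v \<in> verts G \<and> i \<in> {1..m} \<and> j \<in> {1..m} \<and> (u, i) \<noteq> (v, j) \<and>
         (u = v \<or> i = j \<and> {u, v} \<in> edges G)})"

lemma canonical_label_eq_iff:
  "inj_on idx V \<Longrightarrow> u \<in> V \<Longrightarrow> v \<in> V \<Longrightarrow> canonical_label idx u i = canonical_label idx v j \<longleftrightarrow> u = v \<and> i = j"
  unfolding canonical_label_def by (auto dest: inj_onD)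

lemma canonical_cover_edge_iff:
  assumes idx: "inj_on idx (verts G)" and uv: "u \<in> verts G" "v \<in> verts G" "i \<in> {1..m}" "j \<in> {1..m}"
  shows "{canonical_label idx u i, canonical_label idx v j} \<in> edges (canonical_cover_graph G idx m) \<longleftrightarrow>
           (u, i) \<noteq> (v, j) \<and> (u = v \<or> i = j \<and> {u, v} \<in> edges G)"
proof -
  have eq: "canonical_label idx u' i' = canonical_label idx v' j' \<longleftrightarrow> u' = v' \<and> i' = j'"
    if "u' \<in> verts G" "v' \<in> verts G" for u' v' i' j'
    using canonical_label_eq_iff[OF idx that] .
  let ?edge = "\<lambda>u i v j. (u, i) \<noteq> (v, j) \<and> (u = v \<or> i = j \<and> {u, v} \<in> edges G)"
  show ?thesis
  proof
    assume "{canonical_label idx u i, canonical_label idx v j} \<in> edges (canonical_cover_graph G idx m)"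
    then obtain u' i' v' j' where
      same: "{canonical_label idx u i, canonical_label idx v j} = {canonical_label idx u' i', canonical_label idx v' j'}"
      and uv': "u' \<in> verts G" "v' \<in> verts G" "?edge u' i' v' j'"
      unfolding canonical_cover_graph_def edges_def by auto
    from same consider "u = u'" "i = i'" "v = v'" "j = j'" | "u = v'" "i = j'" "v = u'" "j = i'"
      using eq uv uv' by (auto simp: doubleton_eq_iff)
    then show "?edge u i v j" using uv'(3) by cases (auto simp: insert_commute)
  next
    assume "?edge u i v j"
    then show "{canonical_label idx u i, canonical_label idx v j} \<in> edges (canonical_cover_graph G idx m)"
      unfolding canonical_cover_graph_def edges_def using uv by auto
  qed
qed

lemma canonical_cover_edgeE:
  assumes "e \<in> edges (canonical_cover_graph G idx m)"
  obtains u i v j where "e = {canonical_label idx u i, canonical_label idx v j}"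
    "u \<in> verts G" "v \<in> verts G" "i \<in> {1..m}" "j \<in> {1..m}" "(u, i) \<noteq> (v, j)"
    "u = v \<or> i = j \<and> {u, v} \<in> edges G"
  using assms unfolding canonical_cover_graph_def edges_def by auto

lemma verts_canonical_cover_graph:
  "verts (canonical_cover_graph G idx m) = (\<Union>u\<in>verts G. canonical_lists idx m u)"
  unfolding canonical_cover_graph_def by (simp add: verts_def)

lemma wf_graph_canonical_cover_graph:
  assumes G: "wf_graph G" and idx: "inj_on idx (verts G)"
  shows "wf_graph (canonical_cover_graph G idx m)"
  unfolding wf_graph_def
proof (intro conjI ballI)
  show "finite (verts (canonical_cover_graph G idx m))"
    using wf_graph_finite_verts[OF G] unfolding verts_canonical_cover_graph canonical_lists_def by simp
next
  fix e assume "e \<in> edges (canonical_cover_graph G idx m)"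
  then obtain u i v j where e: "e = {canonical_label idx u i, canonical_label idx v j}"
    "u \<in> verts G" "v \<in> verts G" "i \<in> {1..m}" "j \<in> {1..m}" "(u, i) \<noteq> (v, j)"
    "u = v \<or> i = j \<and> {u, v} \<in> edges G"
    by (rule canonical_cover_edgeE)
  have "canonical_label idx u i \<noteq> canonical_label idx v j"
    using canonical_label_eq_iff[OF idx e(2,3)] e(6) by blast
  moreover have "canonical_label idx w k \<in> verts (canonical_cover_graph G idx m)"
    if "w \<in> verts G" "k \<in> {1..m}" for w k
    using that unfolding verts_canonical_cover_graph canonical_lists_def by blast
  ultimately show "\<exists>x y. x \<noteq> y \<and> e = {x, y} \<and> x \<in> verts (canonical_cover_graph G idx m) \<and>
                     y \<in> verts (canonical_cover_graph G idx m)"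
    using e by blast
qed

lemma canonical_cross_edge:
  assumes idx: "inj_on idx (verts G)" and uv: "u \<in> verts G" "v \<in> verts G" "u \<noteq> v"
    and e: "e \<in> cross_edges (canonical_cover_graph G idx m) (canonical_lists idx m u) (canonical_lists idx m v)"
  obtains i where "e = {canonical_label idx u i, canonical_label idx v i}"
proof -
  obtain x y where xy: "e \<in> edges (canonical_cover_graph G idx m)" "x \<in> canonical_lists idx m u"
    "y \<in> canonical_lists idx m v" "e = {x, y}"
    using e unfolding cross_edges_def by blast
  then obtain i j where ij: "i \<in> {1..m}" "j \<in> {1..m}"
    "e = {canonical_label idx u i, canonical_label idx v j}"
    unfolding canonical_lists_def by blast
  then have "i = j" using canonical_cover_edge_iff[OF idx uv(1,2) ij(1,2)] xy(1) uv(3) by simp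
  then show ?thesis using that ij(3) by blast
qed

lemma is_matching_canonical_cross_edges:
  assumes idx: "inj_on idx (verts G)" and uv: "u \<in> verts G" "v \<in> verts G" "u \<noteq> v"
  shows "is_matching (cross_edges (canonical_cover_graph G idx m) (canonical_lists idx m u) (canonical_lists idx m v))"
  unfolding is_matching_def
proof (intro ballI impI)
  let ?lbl = "canonical_label idx"
  fix e e'
  assume e: "e \<in> cross_edges (canonical_cover_graph G idx m) (canonical_lists idx m u) (canonical_lists idx m v)"
    and e': "e' \<in> cross_edges (canonical_cover_graph G idx m) (canonical_lists idx m u) (canonical_lists idx m v)"
    and "e \<noteq> e'"
  moreover obtain i where "e = {?lbl u i, ?lbl v i}" by (rule canonical_cross_edge[OF idx uv e])
  moreover obtain k where "e' = {?lbl u k, ?lbl v k}" by (rule canonical_cross_edge[OF idx uv e'])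
  ultimately show "e \<inter> e' = {}"
    using canonical_label_eq_iff[OF idx] uv by auto
qed

lemma is_mfold_cover_canonical:
  assumes G: "wf_graph G" and idx: "inj_on idx (verts G)"
  shows "is_mfold_cover G m (canonical_lists idx m) (canonical_cover_graph G idx m)"
proof -
  let ?V = "verts G" and ?L = "canonical_lists idx m" and ?H = "canonical_cover_graph G idx m"
  let ?lbl = "canonical_label idx"
  note edge_iff = canonical_cover_edge_iff[OF idx] and label_eq = canonical_label_eq_iff[OF idx]
  have "is_cover G ?L ?H"
    unfolding is_cover_def
  proof (intro conjI ballI impI)
    show "wf_graph ?H" by (rule wf_graph_canonical_cover_graph[OF G idx])
    show "(\<Union>u\<in>?V. ?L u) = verts ?H" by (rule verts_canonical_cover_graph[symmetric])
    show "?L u \<inter> ?L v = {}" if "u \<in> ?V" "v \<in> ?V" "u \<noteq> v" for u v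
      using that label_eq[OF that(1,2)] unfolding canonical_lists_def by blast
    show "{x, y} \<in> edges ?H" if u: "u \<in> ?V" and xy: "x \<in> ?L u" "y \<in> ?L u" "x \<noteq> y" for u x y
    proof -
      obtain i j where "i \<in> {1..m}" "j \<in> {1..m}" "x = ?lbl u i" "y = ?lbl u j"
        using xy(1,2) unfolding canonical_lists_def by blast
      then show ?thesis using edge_iff[OF u u] xy(3) by auto
    qed
    show "u = v \<or> {u, v} \<in> edges G"
      if uv: "u \<in> ?V" "v \<in> ?V" and ne: "cross_edges ?H (?L u) (?L v) \<noteq> {}" for u v
    proof -
      obtain x y where "{x, y} \<in> edges ?H" "x \<in> ?L u" "y \<in> ?L v"
        using ne unfolding cross_edges_def by blast
      moreover obtain i j where "i \<in> {1..m}" "j \<in> {1..m}" "x = ?lbl u i" "y = ?lbl v j"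
        using calculation(2,3) unfolding canonical_lists_def by blast
      ultimately show ?thesis using edge_iff[OF uv] by auto
    qed
    show "is_matching (cross_edges ?H (?L u) (?L v))" if "u \<in> ?V" "v \<in> ?V" "u \<noteq> v" for u v
      using is_matching_canonical_cross_edges[OF idx that] .
  qed
  moreover have "card (?L u) = m" if "u \<in> ?V" for u
    unfolding canonical_lists_def using label_eq[OF that that]
    by (subst card_image) (auto intro: inj_onI)
  ultimately show ?thesis unfolding is_mfold_cover_def canonical_lists_def by simp
qed

lemma P_DP_cover_canonical_le_chrom_poly:
  assumes G: "wf_graph G" and idx: "inj_on idx (verts G)"
  shows "P_DP_cover G (canonical_cover_graph G idx m) \<le> chrom_poly G m"
proof -
  let ?V = "verts G" and ?L = "canonical_lists idx m" and ?H = "canonical_cover_graph G idx m"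
  let ?colour = "\<lambda>(u::'a) x. snd (prod_decode x)"
  have colour: "?colour u (canonical_label idx u i) = i" for u i
    unfolding canonical_label_def by simp
  have "card (conflict_free_assignments ?V ?L (joined_in ?H) (edges G))
          \<le> card (conflict_free_assignments ?V (\<lambda>_. {1..m}) equal_colours (edges G))"
  proof (rule card_conflict_free_assignments_relabel_le)
    show "finite ?V" using G by (rule wf_graph_finite_verts)
    show "e \<subseteq> ?V" if "e \<in> edges G" for e using wf_graph_edge_subset[OF G that] .
    show "inj_on (?colour u) (?L u)" for u
      unfolding canonical_lists_def by (auto intro!: inj_onI simp: colour)
    show "?colour u a \<in> {1..m}" if "a \<in> ?L u" for u a
      using that unfolding canonical_lists_def by (auto simp: colour)
    show "joined_in ?H u a v b"
      if uv: "{u, v} \<in> edges G" "u \<noteq> v" "u \<in> ?V" "v \<in> ?V" and ab: "a \<in> ?L u" "b \<in> ?L v"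
        and same: "equal_colours u (?colour u a) v (?colour v b)" for u v a b
    proof -
      obtain i j where ij: "i \<in> {1..m}" "j \<in> {1..m}" "a = canonical_label idx u i" "b = canonical_label idx v j"
        using ab unfolding canonical_lists_def by blast
      then have "i = j" using same colour by simp
      then show ?thesis using canonical_cover_edge_iff[OF idx uv(3,4) ij(1,2)] ij(3,4) uv(1,2) by simp
    qed
  qed simp
  then show ?thesis
    unfolding P_DP_cover_eq_card_conflict_free_assignments[OF G is_mfold_cover_canonical[OF G idx]]
      chrom_poly_eq_card_conflict_free_assignments .
qed

section \<open>The DP colour function\<close>

text \<open>The canonical cover makes the set of counts nonempty, so the infimum in \<open>P_DP\<close> (which
  would be \<open>0\<close> for the empty set) is attained.\<close>

lemma P_DP_attained_le_chrom_poly: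
  assumes G: "wf_graph G"
  obtains L H where "is_mfold_cover G m L H" "P_DP G m = P_DP_cover G H" "P_DP G m \<le> chrom_poly G m"
proof -
  let ?S = "{P_DP_cover G H | L H. is_mfold_cover G m L H}"
  obtain idx :: "'a \<Rightarrow> nat" where idx: "inj_on idx (verts G)"
    using finite_imp_inj_to_nat_seg[OF wf_graph_finite_verts[OF G]] by blast
  let ?H0 = "canonical_cover_graph G idx m"
  have H0: "P_DP_cover G ?H0 \<in> ?S" using is_mfold_cover_canonical[OF G idx] by blast
  then have "Inf ?S \<in> ?S" by (intro Inf_nat_def1) blast
  then obtain L H where cover: "is_mfold_cover G m L H" "P_DP G m = P_DP_cover G H"
    unfolding P_DP_def by blast
  have "P_DP G m \<le> P_DP_cover G ?H0" unfolding P_DP_def using H0 by (rule cInf_lower) simp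
  also have "\<dots> \<le> chrom_poly G m" by (rule P_DP_cover_canonical_le_chrom_poly[OF G idx])
  finally show ?thesis using that cover by blast
qed

lemma chrom_poly_minus_P_DP_le:
  assumes G: "wf_graph G" and m: "1 \<le> m" and g: "odd g" and girth: "\<forall>k. has_cycle G k \<longrightarrow> g \<le> k"
  shows "real (chrom_poly G m) - real (P_DP G m) \<le> 2 ^ card (edges G) * real m powi (int (card (verts G)) - int g)"
proof -
  obtain L H where cover: "is_mfold_cover G m L H" and min: "P_DP G m = P_DP_cover G H"
    using P_DP_attained_le_chrom_poly[OF G] by blast
  obtain R' where R': "perfect_matching_system G m L R'"
    "conflict_free_assignments (verts G) L R' (edges G) \<subseteq> conflict_free_assignments (verts G) L (joined_in H) (edges G)"
    using perfect_matching_system_completion[OF G matching_system_cover[OF cover]] by blast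
  have "card (conflict_free_assignments (verts G) L R' (edges G)) \<le> P_DP G m"
    unfolding min P_DP_cover_eq_card_conflict_free_assignments[OF G cover]
    using R'(2) finite_conflict_free_assignments[OF G matching_system_cover[OF cover]] by (rule card_mono[rotated])
  then show ?thesis using chrom_poly_minus_card_conflict_free_le[OF G m g girth R'(1)] by linarith
qed

lemma chrom_poly_minus_P_DP_bigo:
  assumes G: "wf_graph G" and g: "odd g" and girth: "\<forall>k. has_cycle G k \<longrightarrow> g \<le> k"
  shows "(\<lambda>m. real (chrom_poly G m) - real (P_DP G m)) \<in> O(\<lambda>m. real m powi (int (card (verts G)) - int g))"
proof (rule bigoI[where c = "2 ^ card (edges G)"])
  show "\<forall>\<^sub>F m in at_top. norm (real (chrom_poly G m) - real (P_DP G m))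
          \<le> 2 ^ card (edges G) * norm (real m powi (int (card (verts G)) - int g))"
    using eventually_ge_at_top[of "1::nat"]
  proof eventually_elim
    case (elim m)
    have "P_DP G m \<le> chrom_poly G m" by (rule P_DP_attained_le_chrom_poly[OF G]) blast
    then show ?case using chrom_poly_minus_P_DP_le[OF G elim g girth] by simp
  qed
qed

theorem theorem4:
  shows "(\<forall>(g::nat) (n::nat) (G::'a graph).
            odd g \<and> g \<ge> 3 \<and> wf_graph G \<and> card (verts G) = n \<and>
            (girth G = enat g \<or> girth G = enat (g + 1)) \<longrightarrow>
            (\<lambda>m. real (chrom_poly G m) - real (P_DP G m)) \<in> O(\<lambda>m. real m powi (int n - int g)))
       \<and> (\<forall>M::'b graph. wf_graph M \<longrightarrow>
            (\<lambda>m. real (chrom_poly M m) - real (P_DP M m)) \<in> O(\<lambda>m. real m powi (int (card (verts M)) - 3)))"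
proof (intro conjI allI impI)
  fix g n :: nat and G :: "'a graph"
  assume h: "odd g \<and> g \<ge> 3 \<and> wf_graph G \<and> card (verts G) = n \<and> (girth G = enat g \<or> girth G = enat (g + 1))"
  have "g \<le> k" if "has_cycle G k" for k
  proof -
    have "enat g \<le> girth G" using h by auto
    also have "girth G \<le> enat k" unfolding girth_def using that by (blast intro: Inf_lower)
    finally show ?thesis by simp
  qed
  then show "(\<lambda>m. real (chrom_poly G m) - real (P_DP G m)) \<in> O(\<lambda>m. real m powi (int n - int g))"
    using chrom_poly_minus_P_DP_bigo[of G g] h by blast
next
  fix M :: "'b graph" assume "wf_graph M"
  moreover have "\<forall>k. has_cycle M k \<longrightarrow> 3 \<le> k" unfolding has_cycle_def by blast
  ultimately show "(\<lambda>m. real (chrom_poly M m) - real (P_DP M m)) \<in> O(\<lambda>m. real m powi (int (card (verts M)) - 3))"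
    using chrom_poly_minus_P_DP_bigo[of M 3] by simp
qed

end
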